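(* Let $r>1$ be real. If $L_r\le 3$, then $C_r\le 5$.
   Context: $p_m$ denotes the $m$-th prime. For $n\in\mathbb{N}$, $\sigma_{-r}(n)=\sum_{d\mid n}d^{-r}$; $C_r$ is the number of connected components of the closure $\overline{\sigma_{-r}(\mathbb{N})}\subseteq\mathbb{R}$. Let $u_m(r)=\prod_{t=m+1}^\infty\frac1{1-p_t^{-r}}$; a prime $p_m$ is $r$-mighty if $1+p_m^{-r}>u_m(r)$. $L_r$ denotes the index of the largest $r$-mighty prime (so $p_{L_r}$ is $r$-mighty and no $p_m$ with $m>L_r$ is), with $L_r=0$ if there are no $r$-mighty primes. *)

theory Defs
  imports "HOL-Analysis.Analysis" "HOL-Computational_Algebra.Primes" "HOL-Library.Infinite_Set"
begin

text \<open>p m is the m-th prime, 1-indexed: p 1 = 2, p 2 = 3, ...\<close>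
definition nth_prime1 :: "nat \<Rightarrow> nat" where
  "nth_prime1 m = enumerate {q::nat. prime q} (m - 1)"

definition sigma_neg :: "real \<Rightarrow> nat \<Rightarrow> real" where
  "sigma_neg r n = (\<Sum>d\<in>{d. d dvd n}. real d powr (- r))"

definition u_tail :: "nat \<Rightarrow> real \<Rightarrow> real" where
  "u_tail m r = (\<Prod>k. 1 / (1 - real (nth_prime1 (m + 1 + k)) powr (- r)))"

definition mighty :: "real \<Rightarrow> nat \<Rightarrow> bool" where
  "mighty r m \<longleftrightarrow> m \<ge> 1 \<and> 1 + real (nth_prime1 m) powr (- r) > u_tail m r"

text \<open>C_r: number of connected components of the closure of sigma_{-r}(N)\<close>
definition sigma_closure :: "real \<Rightarrow> real set" where
  "sigma_closure r = closure (sigma_neg r ` {n. n \<ge> 1})"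

end

(* Write x = 2^-r, y = 3^-r, z = 5^-r and U = u_3(r).  Every sigma_{-r}(n) factors as
   G_x(a) G_y(b) G_z(c) sigma_{-r}(m) with m coprime to 30, where G_q(e) = 1 + q + ... + q^e,
   and 1 <= sigma_{-r}(m) <= U.  If no p_k with k > 3 is r-mighty, choosing the exponents of
   p_4, p_5, ... greedily shows that these sigma_{-r}(m) are dense in [1, U]; hence the closure
   of sigma_{-r}(N) is the closure of the union of the intervals G_x(a) G_y(b) G_z(c) [1, U].
   That 7 = p_4 is not mighty gives U >= 1 + 2 * 7^-r and, by comparing the tail product with a
   sum over primes, r < 5/2.  Elementary inequalities between x, y, z and 7^-r then make enough
   of these intervals overlap: for r <= 3/2 their union is dense in a single interval, and for
   3/2 < r < 5/2 its closure is covered by five intervals. *)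

theory Submission
  imports Defs
begin

section \<open>Enumeration of the primes\<close>

lemma nth_prime1_prime: "prime (nth_prime1 k)"
  unfolding nth_prime1_def using enumerate_in_set[OF primes_infinite] by simp

lemma nth_prime1_less_iff: "1 \<le> j \<Longrightarrow> 1 \<le> k \<Longrightarrow> nth_prime1 j < nth_prime1 k \<longleftrightarrow> j < k"
  unfolding nth_prime1_def using primes_infinite by auto

lemma nth_prime1_inject: "1 \<le> j \<Longrightarrow> 1 \<le> k \<Longrightarrow> nth_prime1 j = nth_prime1 k \<longleftrightarrow> j = k"
  by (metis nth_prime1_less_iff linorder_neq_iff)

lemma nth_prime1_surj:
  assumes "prime q"
  obtains k where "1 \<le> k" "nth_prime1 k = q"
proof -
  obtain n where "enumerate {q::nat. prime q} n = q"
    using enumerate_Ex[OF primes_infinite] assms by blast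
  then show ?thesis using that[of "Suc n"] unfolding nth_prime1_def by simp
qed

lemma nth_prime1_gt: "1 \<le> k \<Longrightarrow> k < nth_prime1 k"
proof (induction k rule: dec_induct)
  case base
  then show ?case using prime_gt_1_nat[OF nth_prime1_prime] by simp
next
  case (step k)
  then show ?case using nth_prime1_less_iff[of k "Suc k"] by simp
qed

lemma nth_prime1_next:
  assumes "1 \<le> k" "prime q" "nth_prime1 k < q" "\<forall>n \<in> {nth_prime1 k<..<q}. \<not> prime n"
  shows "nth_prime1 (k + 1) = q"
proof -
  have "nth_prime1 (k + 1) = (LEAST q. prime q \<and> nth_prime1 k < q)"
    unfolding nth_prime1_def using enumerate_Suc''[OF primes_infinite, of "k - 1"] assms(1) by simp
  also have "\<dots> = q"
    by (rule Least_equality) (use assms(2-4) in \<open>auto simp: not_le\<close>)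
  finally show ?thesis .
qed

lemma nth_prime1_1: "nth_prime1 1 = 2"
  unfolding nth_prime1_def by (simp add: enumerate_0) (rule Least_equality, auto simp: prime_ge_2_nat)

lemma nth_prime1_2: "nth_prime1 2 = 3"
proof -
  have "nth_prime1 (1 + 1) = 3" by (rule nth_prime1_next) (use nth_prime1_1 in auto)
  then show ?thesis by (simp add: numeral_2_eq_2)
qed

lemma nth_prime1_3: "nth_prime1 3 = 5"
proof -
  have "\<forall>n \<in> {3<..<5}. \<not> prime (n::nat)" by (auto simp: greaterThanLessThan_upt)
  then show ?thesis using nth_prime1_next[of 2 5] by (simp add: nth_prime1_2)
qed

lemma nth_prime1_4: "nth_prime1 4 = 7"
proof -
  have "\<forall>n \<in> {5<..<7}. \<not> prime (n::nat)" by (auto simp: greaterThanLessThan_upt)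
  then show ?thesis using nth_prime1_next[of 3 7] by (simp add: nth_prime1_3)
qed

lemma nth_prime1_ge_11: "5 \<le> k \<Longrightarrow> 11 \<le> nth_prime1 k"
proof -
  assume "5 \<le> k"
  then have "7 < nth_prime1 k" using nth_prime1_less_iff[of 4 k] nth_prime1_4 by simp
  moreover have "nth_prime1 k \<notin> {8, 9, 10}" using nth_prime1_prime[of k] by auto
  ultimately show ?thesis by auto
qed

section \<open>Truncated geometric series\<close>

definition geom_sum :: "real \<Rightarrow> nat \<Rightarrow> real" where
  "geom_sum q e = (\<Sum>i\<le>e. q ^ i)"

lemma geom_sum_0 [simp]: "geom_sum q 0 = 1"
  by (simp add: geom_sum_def)

lemma geom_sum_Suc_0 [simp]: "geom_sum q (Suc 0) = 1 + q"
  by (simp add: geom_sum_def)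

lemma geom_sum_2: "geom_sum q 2 = 1 + q + q\<^sup>2"
  by (simp add: geom_sum_def eval_nat_numeral)

lemma geom_sum_Suc: "geom_sum q (Suc e) = geom_sum q e + q ^ Suc e"
  by (simp add: geom_sum_def)

lemma geom_sum_mono: "0 \<le> q \<Longrightarrow> d \<le> e \<Longrightarrow> geom_sum q d \<le> geom_sum q e"
  unfolding geom_sum_def by (intro sum_mono2) auto

lemma geom_sum_ge_1: "0 \<le> q \<Longrightarrow> 1 \<le> geom_sum q e"
  using geom_sum_mono[of q 0 e] by simp

lemma geom_sum_ge_1_plus: "0 \<le> q \<Longrightarrow> 0 < e \<Longrightarrow> 1 + q \<le> geom_sum q e"
  using geom_sum_mono[of q 1 e] unfolding geom_sum_def by simp

lemma geom_sum_less: "0 < q \<Longrightarrow> q < 1 \<Longrightarrow> geom_sum q e < 1 / (1 - q)"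
  unfolding geom_sum_def by (rule geometric_sum_less) auto

lemma geom_sum_tendsto: "0 \<le> q \<Longrightarrow> q < 1 \<Longrightarrow> geom_sum q \<longlonglongrightarrow> 1 / (1 - q)"
  using geometric_sums[of q] unfolding sums_def_le geom_sum_def by simp

lemma geom_sum_Suc_le:
  assumes "0 \<le> q" "q \<le> 1" "k \<le> Suc e"
  shows "geom_sum q (Suc e) \<le> geom_sum q e * (1 + q ^ k)"
proof -
  have "q ^ Suc e \<le> 1 * q ^ k" using power_decreasing[OF assms(3,1,2)] by simp
  also have "\<dots> \<le> geom_sum q e * q ^ k" using geom_sum_ge_1[OF assms(1)] assms(1) by (intro mult_right_mono) auto
  finally show ?thesis by (simp add: geom_sum_Suc algebra_simps)
qed

(* The intervals geom_sum q (c + k) * [\<alpha>, \<beta>) overlap, because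
   geom_sum q (Suc e) \<le> geom_sum q e * (1 + q ^ Suc k); so they fill everything from the first
   left end up to their limit \<beta> / (1 - q). *)
lemma geom_sum_cover:
  assumes "0 \<le> q" "q < 1" "0 < \<alpha>" "\<alpha> * (1 + q ^ Suc k) \<le> \<beta>"
    and "geom_sum q k * \<alpha> \<le> v" "v < \<beta> / (1 - q)"
  obtains c where "geom_sum q (c + k) * \<alpha> \<le> v" "v < geom_sum q (c + k) * \<beta>"
proof -
  have "(\<lambda>c. geom_sum q (c + k) * \<beta>) \<longlonglongrightarrow> 1 / (1 - q) * \<beta>"
    using assms(1,2) by (intro tendsto_mult_right LIMSEQ_ignore_initial_segment geom_sum_tendsto)
  then have "eventually (\<lambda>c. v < geom_sum q (c + k) * \<beta>) sequentially"
    using assms(6) by (intro order_tendstoD(1)) simp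
  then have "\<exists>c. v < geom_sum q (c + k) * \<beta>" by (auto simp: eventually_sequentially)
  define c where "c = (LEAST c. v < geom_sum q (c + k) * \<beta>)"
  have upper: "v < geom_sum q (c + k) * \<beta>"
    unfolding c_def using \<open>\<exists>c. _\<close> by (rule LeastI_ex)
  have "geom_sum q (c + k) * \<alpha> \<le> v"
  proof (cases c)
    case 0
    then show ?thesis using assms(5) by simp
  next
    case (Suc d)
    then have "\<not> v < geom_sum q (d + k) * \<beta>"
      using not_less_Least[of d "\<lambda>c. v < geom_sum q (c + k) * \<beta>"] unfolding c_def by simp
    have "geom_sum q (c + k) * \<alpha> \<le> geom_sum q (d + k) * (1 + q ^ Suc k) * \<alpha>"
      using geom_sum_Suc_le[of q "Suc k" "d + k"] assms(1-3) Suc by (intro mult_right_mono) auto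
    also have "\<dots> \<le> geom_sum q (d + k) * \<beta>"
      using mult_left_mono[OF assms(4), of "geom_sum q (d + k)"] geom_sum_ge_1[OF assms(1), of "d + k"]
      by (simp add: algebra_simps)
    finally show ?thesis using \<open>\<not> v < _\<close> by simp
  qed
  with upper that show ?thesis by blast
qed

lemma geom_sum_scaled_cover:
  assumes "0 \<le> q" "q < 1" "0 < \<alpha>" "\<alpha> * (1 + q ^ Suc k) \<le> \<beta>"
    and "\<And>c t. \<alpha> \<le> t \<Longrightarrow> t < \<beta> \<Longrightarrow> geom_sum q (c + k) * t \<in> T"
  shows "{geom_sum q k * \<alpha> ..< \<beta> / (1 - q)} \<subseteq> T"
proof
  fix v assume "v \<in> {geom_sum q k * \<alpha> ..< \<beta> / (1 - q)}"
  then obtain c where c: "geom_sum q (c + k) * \<alpha> \<le> v" "v < geom_sum q (c + k) * \<beta>"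
    using geom_sum_cover[OF assms(1-4)] by auto
  define g where "g = geom_sum q (c + k)"
  have "0 < g" unfolding g_def using geom_sum_ge_1[OF assms(1)] by (meson less_le_trans zero_less_one)
  then have "\<alpha> \<le> v / g" "v / g < \<beta>" using c unfolding g_def by (auto simp: field_simps)
  then have "g * (v / g) \<in> T" using assms(5) unfolding g_def by blast
  then show "v \<in> T" using \<open>0 < g\<close> by simp
qed

section \<open>Divisor sums and Euler factors\<close>

lemma sigma_neg_ge_1:
  assumes "0 < n"
  shows "1 \<le> sigma_neg r n"
proof -
  have "real 1 powr - r \<le> sigma_neg r n"
    unfolding sigma_neg_def using assms by (intro member_le_sum) (auto simp: finite_divisors_nat)
  then show ?thesis by simp
qed

lemma sigma_neg_mult:
  assumes "coprime a b" "0 < a" "0 < b"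
  shows "sigma_neg r (a * b) = sigma_neg r a * sigma_neg r b"
proof -
  let ?D = "\<lambda>n. {d::nat. d dvd n}"
  have "bij_betw (\<lambda>(d, e). d * e) (?D a \<times> ?D b) (?D (a * b))"
  proof (rule bij_betwI')
    fix u v assume uv: "u \<in> ?D a \<times> ?D b" "v \<in> ?D a \<times> ?D b"
    obtain d1 e1 d2 e2 where u: "u = (d1, e1)" and v: "v = (d2, e2)" by fastforce
    have "d1 = d2" if "d1 * e1 = d2 * e2"
    proof (rule dvd_antisym)
      have "coprime d1 e2" "coprime d2 e1" using uv assms(1) unfolding u v by (auto intro: coprime_divisors)
      then show "d1 dvd d2" "d2 dvd d1" using that
        by (metis coprime_dvd_mult_left_iff dvd_triv_left)+
    qed
    moreover have "0 < d1" using uv assms(2) unfolding u by (auto intro: gr0I)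
    ultimately show "((\<lambda>(d, e). d * e) u = (\<lambda>(d, e). d * e) v) = (u = v)"
      unfolding u v by auto
  next
    fix u assume "u \<in> ?D a \<times> ?D b"
    then show "(\<lambda>(d, e). d * e) u \<in> ?D (a * b)" by (auto intro: mult_dvd_mono)
  next
    fix n assume "n \<in> ?D (a * b)"
    then obtain d e where "n = d * e" "d dvd a" "e dvd b" using division_decomp by blast
    then show "\<exists>u \<in> ?D a \<times> ?D b. n = (\<lambda>(d, e). d * e) u" by force
  qed
  then have "sigma_neg r (a * b) = (\<Sum>(d, e) \<in> ?D a \<times> ?D b. real (d * e) powr - r)"
    unfolding sigma_neg_def by (subst sum.reindex_bij_betw[symmetric]) (auto simp: case_prod_unfold)
  also have "\<dots> = (\<Sum>d \<in> ?D a. \<Sum>e \<in> ?D b. real d powr - r * real e powr - r)"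
    by (simp add: sum.cartesian_product powr_mult case_prod_unfold)
  also have "\<dots> = sigma_neg r a * sigma_neg r b"
    unfolding sigma_neg_def by (simp add: sum_product)
  finally show ?thesis .
qed

lemma sigma_neg_prime_power:
  assumes "prime p"
  shows "sigma_neg r (p ^ e) = geom_sum (real p powr - r) e"
proof -
  have "{d. d dvd p ^ e} = (\<lambda>i. p ^ i) ` {..e}"
    using divides_primepow_nat[OF assms] by auto
  moreover have "inj_on (\<lambda>i. p ^ i) {..e}"
    using prime_gt_1_nat[OF assms] by (auto intro!: inj_onI simp: power_inject_exp)
  ultimately show ?thesis
    unfolding sigma_neg_def geom_sum_def using prime_gt_0_nat[OF assms]
    by (simp add: sum.reindex powr_realpow[symmetric] powr_powr mult.commute)
qed

definition euler_factor :: "real \<Rightarrow> nat \<Rightarrow> real" where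
  "euler_factor r k = 1 / (1 - real (nth_prime1 k) powr - r)"

lemma u_tail_eq_prodinf: "u_tail m r = (\<Prod>k. euler_factor r (m + 1 + k))"
  unfolding u_tail_def euler_factor_def ..

lemma nth_prime1_powr_less_half:
  assumes "1 < r"
  shows "real (nth_prime1 k) powr - r < 1 / 2"
proof -
  have "real (nth_prime1 k) powr - r \<le> 2 powr - r"
    using prime_ge_2_nat[OF nth_prime1_prime[of k]] assms by (intro powr_mono2') auto
  also have "\<dots> < 2 powr - 1" using assms by (intro powr_less_mono) auto
  finally show ?thesis by (simp add: powr_minus_divide)
qed

lemma euler_factor_gt_1: "1 < r \<Longrightarrow> 1 < euler_factor r k"
  using nth_prime1_powr_less_half[of r k] unfolding euler_factor_def
  by (simp add: prime_gt_0_nat[OF nth_prime1_prime])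

lemma convergent_prod_euler_factor:
  assumes "1 < r"
  shows "convergent_prod (euler_factor r)"
proof -
  define b where "b k = euler_factor r k - 1" for k
  have b_pos: "0 < b k" for k using euler_factor_gt_1[OF assms] unfolding b_def by simp
  have "summable b"
  proof (rule summable_comparison_test')
    show "summable (\<lambda>k. 2 * real k powr - r)"
      using summable_real_powr_iff[of "- r"] assms by (intro summable_mult) simp
    fix k :: nat assume "1 \<le> k"
    define a where "a = real (nth_prime1 k) powr - r"
    have a: "0 < a" "a < 1 / 2"
      using nth_prime1_powr_less_half[OF assms] prime_gt_0_nat[OF nth_prime1_prime] unfolding a_def by auto
    have "b k = a / (1 - a)" using a unfolding b_def euler_factor_def a_def by (simp add: field_simps)
    also have "\<dots> \<le> 2 * a" using a by (simp add: field_simps)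
    also have "\<dots> \<le> 2 * real k powr - r"
      unfolding a_def using nth_prime1_gt[OF \<open>1 \<le> k\<close>] \<open>1 \<le> k\<close> assms by (auto intro!: powr_mono2')
    finally show "norm (b k) \<le> 2 * real k powr - r" using b_pos[of k] by simp
  qed
  then have "convergent_prod (\<lambda>k. 1 + b k)"
    using convergent_prod_iff_summable_real b_pos by blast
  then show ?thesis unfolding b_def by simp
qed

lemma convergent_prod_euler_factor_tail: "1 < r \<Longrightarrow> convergent_prod (\<lambda>k. euler_factor r (m + 1 + k))"
  using convergent_prod_ignore_initial_segment[OF convergent_prod_euler_factor, of r "m + 1"]
  by (simp add: add.commute)

lemma u_tail_Suc:
  assumes "1 < r"
  shows "u_tail m r = euler_factor r (Suc m) * u_tail (Suc m) r"
proof -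
  have "euler_factor r (Suc m) \<noteq> 0" using euler_factor_gt_1[OF assms, of "Suc m"] by simp
  then have "u_tail (Suc m) r = u_tail m r / euler_factor r (Suc m)"
    unfolding u_tail_eq_prodinf
    using prodinf_split_head[OF convergent_prod_euler_factor_tail[OF assms, of m]] by simp
  then show ?thesis using euler_factor_gt_1[OF assms, of "Suc m"] by (simp add: field_simps)
qed

lemma u_tail_gt_1: "1 < r \<Longrightarrow> 1 < u_tail m r"
  unfolding u_tail_eq_prodinf
  by (intro less_1_prodinf convergent_prod_euler_factor_tail euler_factor_gt_1)

lemma prod_euler_factor_le_u_tail:
  assumes "1 < r" "finite K" "K \<subseteq> {m<..}"
  shows "prod (euler_factor r) K \<le> u_tail m r"
proof -
  have ge_1: "1 \<le> euler_factor r k" for k using euler_factor_gt_1[OF assms(1)] less_imp_le by blast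
  obtain n where n: "K \<subseteq> {..<n}" using finite_nat_bounded[OF assms(2)] by blast
  have "K \<subseteq> (\<lambda>i. m + 1 + i) ` {..<n}"
  proof
    fix k assume "k \<in> K"
    then have "k = m + 1 + (k - (m + 1))" "k - (m + 1) < n" using assms(3) n by auto
    then show "k \<in> (\<lambda>i. m + 1 + i) ` {..<n}" by blast
  qed
  then have "prod (euler_factor r) K \<le> prod (euler_factor r) ((\<lambda>i. m + 1 + i) ` {..<n})"
    using ge_1 by (intro prod_mono2) (auto intro: order_trans[OF zero_le_one])
  also have "\<dots> = (\<Prod>i<n. euler_factor r (m + 1 + i))"
    by (subst prod.reindex) (auto simp: inj_on_def)
  also have "\<dots> \<le> u_tail m r"
    unfolding u_tail_eq_prodinf
    using convergent_prod_has_prod[OF convergent_prod_euler_factor_tail[OF assms(1)]] ge_1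
    by (intro prod_le_prodinf) (auto intro: order_trans[OF zero_le_one])
  finally show ?thesis .
qed

lemma u_tail_tendsto_1:
  assumes "1 < r"
  shows "(\<lambda>m. u_tail m r) \<longlonglongrightarrow> 1"
proof -
  define f where "f = (\<lambda>k. euler_factor r (1 + k))"
  have "f k \<noteq> 0" for k unfolding f_def using euler_factor_gt_1[OF assms, of "1 + k"] by simp
  then have f: "convergent_prod f" "\<And>k. f k \<noteq> 0"
    unfolding f_def using convergent_prod_euler_factor_tail[OF assms, of 0] by auto
  have "u_tail m r = prodinf f / (\<Prod>k<m. f k)" for m
    unfolding u_tail_eq_prodinf using prodinf_divide_initial_segment[OF f(1), of m] f(2)
    by (simp add: f_def add_ac)
  moreover have "(\<lambda>m. prodinf f / (\<Prod>k<m. f k)) \<longlonglongrightarrow> prodinf f / prodinf f"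
    using convergent_prod_LIMSEQ[OF f(1)] prodinf_nonzero[OF f]
    by (intro tendsto_divide) (auto simp: LIMSEQ_lessThan_iff_atMost)
  ultimately show ?thesis using prodinf_nonzero[OF f] by simp
qed

(* nth_prime1 0 = nth_prime1 1 = 2 because of the truncated subtraction in its definition,
   hence the guard 1 \<le> k. *)
definition prime_indices :: "nat \<Rightarrow> nat set" where
  "prime_indices n = {k. 1 \<le> k \<and> nth_prime1 k dvd n}"

lemma prime_indices_1 [simp]: "prime_indices 1 = {}"
proof -
  have "\<not> nth_prime1 k dvd 1" for k using prime_gt_1_nat[OF nth_prime1_prime[of k]] by simp
  then show ?thesis unfolding prime_indices_def by simp
qed

lemma finite_prime_indices:
  assumes "0 < n"
  shows "finite (prime_indices n)"
proof (rule finite_subset)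
  show "prime_indices n \<subseteq> {..n}"
  proof
    fix k assume "k \<in> prime_indices n"
    then have "k < nth_prime1 k" "nth_prime1 k \<le> n"
      using nth_prime1_gt assms unfolding prime_indices_def by (auto intro: dvd_imp_le)
    then show "k \<in> {..n}" by simp
  qed
qed simp

lemma prime_indices_mono: "a dvd b \<Longrightarrow> prime_indices a \<subseteq> prime_indices b"
  unfolding prime_indices_def by (auto intro: dvd_trans)

lemma prime_indices_prime_power_mult:
  assumes "1 \<le> j"
  shows "prime_indices (nth_prime1 j ^ e * m) \<subseteq> insert j (prime_indices m)"
proof
  fix k assume "k \<in> prime_indices (nth_prime1 j ^ e * m)"
  then have k: "1 \<le> k" "nth_prime1 k dvd nth_prime1 j ^ e * m" unfolding prime_indices_def by auto
  show "k \<in> insert j (prime_indices m)"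
  proof (cases "nth_prime1 k dvd m")
    case False
    then have "nth_prime1 k dvd nth_prime1 j"
      using k(2) nth_prime1_prime prime_dvd_mult_iff prime_dvd_power by metis
    then have "nth_prime1 k = nth_prime1 j" using nth_prime1_prime primes_dvd_imp_eq by blast
    then show ?thesis using nth_prime1_inject[OF k(1) assms] by simp
  qed (use k in \<open>simp add: prime_indices_def\<close>)
qed

lemma prime_power_mult_decomp:
  fixes p n :: nat
  assumes "prime p" "0 < n"
  obtains e m where "n = p ^ e * m" "\<not> p dvd m" "0 < m"
proof -
  obtain m where "n = p ^ multiplicity p n * m" "\<not> p dvd m"
    using multiplicity_decompose'[of n p] assms by (metis not_gr0 not_prime_unit)
  moreover then have "0 < m" using assms(2) by (metis gr0I mult_0_right)
  ultimately show ?thesis using that by blast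
qed

lemma nth_prime1_power_mult_decomp:
  fixes n :: nat
  assumes "1 < n"
  obtains j e m where "1 \<le> j" "0 < e" "0 < m" "m < n" "n = nth_prime1 j ^ e * m" "\<not> nth_prime1 j dvd m"
proof -
  obtain q where q: "prime q" "q dvd n" using prime_factor_nat[of n] assms by auto
  obtain j where j: "1 \<le> j" "nth_prime1 j = q" using nth_prime1_surj[OF q(1)] by blast
  obtain e m where n: "n = q ^ e * m" and m: "\<not> q dvd m" "0 < m"
    using prime_power_mult_decomp[OF q(1)] assms by (metis less_trans zero_less_one)
  have "e \<noteq> 0"
  proof
    assume "e = 0"
    then show False using n q(2) m(1) by simp
  qed
  then have "1 < q ^ e" using prime_gt_1_nat[OF q(1)] by (intro one_less_power) auto
  then have "1 * m < q ^ e * m" using m(2) by (intro mult_strict_right_mono) auto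
  then show ?thesis using that[of j e m] j n m \<open>e \<noteq> 0\<close> by simp
qed

lemma sigma_neg_nth_prime1_power_le:
  assumes "1 < r"
  shows "sigma_neg r (nth_prime1 j ^ e) \<le> euler_factor r j"
proof -
  have "geom_sum (real (nth_prime1 j) powr - r) e < 1 / (1 - real (nth_prime1 j) powr - r)"
    using nth_prime1_powr_less_half[OF assms, of j] prime_gt_0_nat[OF nth_prime1_prime]
    by (intro geom_sum_less) auto
  then show ?thesis unfolding sigma_neg_prime_power[OF nth_prime1_prime] euler_factor_def by simp
qed

lemma sigma_neg_le_prod_euler_factor:
  assumes "1 < r" "0 < n"
  shows "sigma_neg r n \<le> prod (euler_factor r) (prime_indices n)"
  using assms(2)
proof (induction n rule: less_induct)
  case (less n)
  have ge_1: "1 \<le> euler_factor r k" for k using euler_factor_gt_1[OF assms(1)] less_imp_le by blast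
  show ?case
  proof (cases "n = 1")
    case True
    then show ?thesis by (simp add: sigma_neg_def del: One_nat_def)
  next
    case False
    with less.prems have "1 < n" by simp
    then obtain j e m where jem: "1 \<le> j" "0 < e" "0 < m" "m < n"
        "n = nth_prime1 j ^ e * m" "\<not> nth_prime1 j dvd m"
      by (rule nth_prime1_power_mult_decomp)
    have "coprime (nth_prime1 j ^ e) m" using prime_imp_coprime[OF nth_prime1_prime jem(6)] by simp
    then have "sigma_neg r n = sigma_neg r (nth_prime1 j ^ e) * sigma_neg r m"
      unfolding jem(5) using jem(3) prime_gt_0_nat[OF nth_prime1_prime] by (intro sigma_neg_mult) auto
    also have "\<dots> \<le> euler_factor r j * prod (euler_factor r) (prime_indices m)"
      using sigma_neg_nth_prime1_power_le[OF assms(1)] less.IH[OF jem(4,3)]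
        sigma_neg_ge_1[OF jem(3), of r] ge_1[of j]
      by (intro mult_mono) auto
    also have "\<dots> = prod (euler_factor r) (insert j (prime_indices m))"
    proof -
      have "j \<notin> prime_indices m" using jem(6) unfolding prime_indices_def by auto
      then show ?thesis using finite_prime_indices[OF jem(3)] by simp
    qed
    also have "\<dots> \<le> prod (euler_factor r) (prime_indices n)"
    proof (rule prod_mono2)
      show "insert j (prime_indices m) \<subseteq> prime_indices n"
        using prime_indices_mono[of m n] jem(1,2,5) unfolding prime_indices_def by auto
    qed (use finite_prime_indices[OF less.prems] ge_1 in \<open>auto intro: order_trans[OF zero_le_one]\<close>)
    finally show ?thesis .
  qed
qed

lemma coprime_prime_right_iff: "prime p \<Longrightarrow> coprime n p \<longleftrightarrow> \<not> p dvd (n::nat)"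
  using coprime_commute not_prime_unit prime_imp_coprime coprime_absorb_left by metis

lemma coprime_30_iff: "coprime m 30 \<longleftrightarrow> \<not> 2 dvd m \<and> \<not> 3 dvd m \<and> \<not> 5 dvd (m::nat)"
proof -
  have "coprime m 30 \<longleftrightarrow> coprime m 2 \<and> coprime m 3 \<and> coprime m 5"
    using coprime_mult_right_iff[of m "2 * 3" 5] coprime_mult_right_iff[of m 2 3] by simp
  then show ?thesis by (simp add: coprime_prime_right_iff)
qed

lemma coprime_30_iff_prime_indices: "coprime m 30 \<longleftrightarrow> prime_indices m \<subseteq> {3<..}"
proof -
  have small: "k = 1 \<or> k = 2 \<or> k = 3" if "k \<in> prime_indices m" "k \<le> 3" for k
  proof -
    have "1 \<le> k" using that(1) unfolding prime_indices_def by simp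
    then show ?thesis using that(2) by presburger
  qed
  have "prime_indices m \<subseteq> {3<..} \<longleftrightarrow> 1 \<notin> prime_indices m \<and> 2 \<notin> prime_indices m \<and> 3 \<notin> prime_indices m"
  proof
    assume "1 \<notin> prime_indices m \<and> 2 \<notin> prime_indices m \<and> 3 \<notin> prime_indices m"
    then show "prime_indices m \<subseteq> {3<..}" using small by (metis greaterThan_iff not_less subsetI)
  qed auto
  then show ?thesis
    by (simp add: coprime_30_iff prime_indices_def nth_prime1_1 nth_prime1_2 nth_prime1_3 del: One_nat_def)
qed

lemma sigma_neg_le_u_tail_3:
  assumes "1 < r" "0 < m" "coprime m 30"
  shows "sigma_neg r m \<le> u_tail 3 r"
  using sigma_neg_le_prod_euler_factor[OF assms(1,2)]
    prod_euler_factor_le_u_tail[OF assms(1) finite_prime_indices[OF assms(2)]] assms(3)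
  by (simp add: coprime_30_iff_prime_indices order_trans)

section \<open>Density of the divisor sums\<close>

lemma sigma_neg_greedy_approximation:
  assumes r: "1 < r" and not_mighty: "\<And>k. 3 < k \<Longrightarrow> \<not> mighty r k"
    and t: "1 \<le> t" "t < u_tail 3 r"
  shows "\<exists>m > 0. prime_indices m \<subseteq> {3<..3 + i} \<and> sigma_neg r m \<le> t
           \<and> t < sigma_neg r m * u_tail (3 + i) r"
proof (induction i)
  case 0
  show ?case using t by (intro exI[of _ 1]) (simp add: sigma_neg_def del: One_nat_def)
next
  case (Suc i)
  then obtain m where m: "0 < m" "prime_indices m \<subseteq> {3<..3 + i}" "sigma_neg r m \<le> t"
      "t < sigma_neg r m * u_tail (3 + i) r"
    by blast
  define j where "j = Suc (3 + i)"
  define q where "q = real (nth_prime1 j) powr - r"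
  define V where "V = u_tail j r"
  have q: "0 \<le> q" "q < 1" using nth_prime1_powr_less_half[OF r, of j] unfolding q_def by auto
  have "1 + q \<le> V" using not_mighty[of j] unfolding mighty_def q_def V_def j_def by auto
  have "u_tail (3 + i) r = V / (1 - q)"
    using u_tail_Suc[OF r, of "3 + i"] unfolding euler_factor_def V_def q_def j_def by simp
  have s: "1 \<le> sigma_neg r m" using sigma_neg_ge_1[OF m(1)] .
  (* The exponent e of p_j is chosen greedily; that p_j is not mighty is exactly the overlap
     condition of geom_sum_cover. *)
  obtain e where e: "geom_sum q (e + 0) * sigma_neg r m \<le> t" "t < geom_sum q (e + 0) * (sigma_neg r m * V)"
  proof (rule geom_sum_cover[OF q, of "sigma_neg r m" 0 "sigma_neg r m * V" t])
    show "sigma_neg r m * (1 + q ^ Suc 0) \<le> sigma_neg r m * V"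
      using \<open>1 + q \<le> V\<close> s by (intro mult_left_mono) auto
    show "t < sigma_neg r m * V / (1 - q)"
      using m(4) \<open>u_tail (3 + i) r = V / (1 - q)\<close> by simp
  qed (use s m(3) in auto)
  have "j \<notin> prime_indices m" using m(2) unfolding j_def by auto
  then have "\<not> nth_prime1 j dvd m" unfolding prime_indices_def j_def by simp
  then have "coprime (nth_prime1 j ^ e) m" using prime_imp_coprime[OF nth_prime1_prime] by simp
  then have "sigma_neg r (nth_prime1 j ^ e * m) = geom_sum q e * sigma_neg r m"
    using sigma_neg_mult[of _ m r] sigma_neg_prime_power[OF nth_prime1_prime] m(1)
      prime_gt_0_nat[OF nth_prime1_prime] unfolding q_def by simp
  moreover have "prime_indices (nth_prime1 j ^ e * m) \<subseteq> {3<..3 + Suc i}"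
    by (rule order_trans[OF prime_indices_prime_power_mult]) (use m(2) in \<open>auto simp: j_def\<close>)
  moreover have "0 < nth_prime1 j ^ e * m" using m(1) prime_gt_0_nat[OF nth_prime1_prime] by simp
  ultimately show ?case using e V_def j_def by (intro exI[of _ "nth_prime1 j ^ e * m"]) (auto simp: mult.assoc)
qed

lemma sigma_neg_coprime_30_dense:
  assumes r: "1 < r" and not_mighty: "\<And>k. 3 < k \<Longrightarrow> \<not> mighty r k"
    and t: "1 \<le> t" "t < u_tail 3 r" and "0 < \<epsilon>"
  obtains m where "0 < m" "coprime m 30" "\<bar>sigma_neg r m - t\<bar> < \<epsilon>"
proof -
  have "eventually (\<lambda>n. u_tail n r < 1 + \<epsilon> / t) sequentially"
    using u_tail_tendsto_1[OF r] \<open>0 < \<epsilon>\<close> t(1) by (intro order_tendstoD(2)) auto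
  then obtain N where "\<forall>n \<ge> N. u_tail n r < 1 + \<epsilon> / t" by (auto simp: eventually_sequentially)
  then have N: "u_tail (3 + N) r < 1 + \<epsilon> / t" by simp
  obtain m where m: "0 < m" "prime_indices m \<subseteq> {3<..3 + N}" "sigma_neg r m \<le> t"
      "t < sigma_neg r m * u_tail (3 + N) r"
    using sigma_neg_greedy_approximation[OF r not_mighty t] by blast
  have "t - sigma_neg r m < sigma_neg r m * (u_tail (3 + N) r - 1)"
    using m(4) by (simp add: algebra_simps)
  also have "\<dots> \<le> t * (u_tail (3 + N) r - 1)"
    using m(3) u_tail_gt_1[OF r, of "3 + N"] by (intro mult_right_mono) auto
  also have "\<dots> < t * (\<epsilon> / t)" using N t(1) by (intro mult_strict_left_mono) auto
  also have "\<dots> = \<epsilon>" using t(1) by simp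
  finally have "\<bar>sigma_neg r m - t\<bar> < \<epsilon>" using m(3) by simp
  moreover have "coprime m 30" using m(2) coprime_30_iff_prime_indices by auto
  ultimately show ?thesis using that m(1) by blast
qed

lemma smooth_coprime_30_decomp:
  fixes n :: nat
  assumes "0 < n"
  obtains a b c m where "n = 2 ^ a * 3 ^ b * 5 ^ c * m" "coprime m 30" "0 < m"
proof -
  obtain a n2 where 2: "n = 2 ^ a * n2" "\<not> 2 dvd n2" "0 < n2"
    using prime_power_mult_decomp[of 2 n] assms by auto
  obtain b n3 where 3: "n2 = 3 ^ b * n3" "\<not> 3 dvd n3" "0 < n3"
    using prime_power_mult_decomp[of 3 n2] 2(3) by auto
  obtain c m where 5: "n3 = 5 ^ c * m" "\<not> 5 dvd m" "0 < m"
    using prime_power_mult_decomp[of 5 n3] 3(3) by auto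
  have "coprime m 30" using 2(2) 3 5 by (auto simp: coprime_30_iff)
  moreover have "n = 2 ^ a * 3 ^ b * 5 ^ c * m" using 2(1) 3(1) 5(1) by (simp add: mult.assoc)
  ultimately show ?thesis using that 5(3) by blast
qed

lemma sigma_neg_smooth_mult:
  assumes "coprime m 30" "0 < m"
  shows "sigma_neg r (2 ^ a * 3 ^ b * 5 ^ c * m)
    = geom_sum (2 powr - r) a * geom_sum (3 powr - r) b * geom_sum (5 powr - r) c * sigma_neg r m"
proof -
  have m: "\<not> 2 dvd m" "\<not> 3 dvd m" "\<not> 5 dvd m" using assms(1) by (auto simp: coprime_30_iff)
  have "coprime (2 ^ a * 3 ^ b) (5 ^ c :: nat)" "coprime (2 ^ a) (3 ^ b :: nat)"
    by (simp_all add: coprime_commute[of 2] coprime_commute[of 3] prime_imp_coprime)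
  moreover have "coprime (2 ^ a * 3 ^ b * 5 ^ c) m"
    using m by (simp add: prime_imp_coprime)
  ultimately show ?thesis using assms(2)
    by (simp add: sigma_neg_mult sigma_neg_prime_power)
qed

(* For x, y, z = 2 powr - r, 3 powr - r, 5 powr - r and U = u_tail 3 r these are the numbers
   sigma_neg r (2 ^ a * 3 ^ b * 5 ^ c) * t with 1 \<le> t \<le> U. *)
definition geom_products :: "real \<Rightarrow> real \<Rightarrow> real \<Rightarrow> real \<Rightarrow> real set" where
  "geom_products x y z U =
    {geom_sum x a * geom_sum y b * geom_sum z c * t | a b c t. 1 \<le> t \<and> t \<le> U}"

lemma sigma_neg_in_geom_products:
  assumes "1 < r" "0 < n"
  shows "sigma_neg r n \<in> geom_products (2 powr - r) (3 powr - r) (5 powr - r) (u_tail 3 r)"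
proof -
  obtain a b c m where n: "n = 2 ^ a * 3 ^ b * 5 ^ c * m" "coprime m 30" "0 < m"
    using smooth_coprime_30_decomp[OF assms(2)] .
  then show ?thesis unfolding geom_products_def
    using sigma_neg_smooth_mult[OF n(2,3)] sigma_neg_ge_1[OF n(3)] sigma_neg_le_u_tail_3[OF assms(1) n(3,2)]
    by blast
qed

lemma geom_products_mem_sigma_closure:
  assumes r: "1 < r" and not_mighty: "\<And>k. 3 < k \<Longrightarrow> \<not> mighty r k"
    and t: "1 \<le> t" "t < u_tail 3 r"
  shows "geom_sum (2 powr - r) a * geom_sum (3 powr - r) b * geom_sum (5 powr - r) c * t \<in> sigma_closure r"
proof -
  define s where "s = geom_sum (2 powr - r) a * geom_sum (3 powr - r) b * geom_sum (5 powr - r) c"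
  have "0 < s" unfolding s_def using geom_sum_ge_1[of _ a] geom_sum_ge_1[of _ b] geom_sum_ge_1[of _ c]
    by (metis mult_pos_pos powr_ge_zero less_le_trans zero_less_one)
  show ?thesis unfolding sigma_closure_def closure_approachable s_def[symmetric]
  proof (intro allI impI)
    fix \<epsilon> :: real assume "0 < \<epsilon>"
    obtain m where m: "0 < m" "coprime m 30" "\<bar>sigma_neg r m - t\<bar> < \<epsilon> / s"
      using sigma_neg_coprime_30_dense[OF r not_mighty t] \<open>0 < \<epsilon>\<close> \<open>0 < s\<close> by (metis divide_pos_pos)
    let ?n = "2 ^ a * 3 ^ b * 5 ^ c * m"
    have "sigma_neg r ?n = s * sigma_neg r m"
      unfolding s_def using sigma_neg_smooth_mult[OF m(2,1)] by simp
    then have "dist (sigma_neg r ?n) (s * t) = s * \<bar>sigma_neg r m - t\<bar>"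
      using \<open>0 < s\<close> by (simp add: dist_real_def abs_mult right_diff_distrib[symmetric])
    also have "\<dots> < \<epsilon>" using m(3) \<open>0 < s\<close> by (simp add: field_simps)
    finally show "\<exists>y \<in> sigma_neg r ` {n. 1 \<le> n}. dist y (s * t) < \<epsilon>"
      using m(1) by (intro bexI[of _ "sigma_neg r ?n"]) auto
  qed
qed

theorem sigma_closure_eq_closure_geom_products:
  assumes r: "1 < r" and not_mighty: "\<And>k. 3 < k \<Longrightarrow> \<not> mighty r k"
  shows "sigma_closure r = closure (geom_products (2 powr - r) (3 powr - r) (5 powr - r) (u_tail 3 r))"
proof
  show "sigma_closure r \<subseteq> closure (geom_products (2 powr - r) (3 powr - r) (5 powr - r) (u_tail 3 r))"
    unfolding sigma_closure_def using sigma_neg_in_geom_products[OF r] by (intro closure_mono) auto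
next
  have "geom_products (2 powr - r) (3 powr - r) (5 powr - r) (u_tail 3 r) \<subseteq> sigma_closure r"
  proof
    fix v assume "v \<in> geom_products (2 powr - r) (3 powr - r) (5 powr - r) (u_tail 3 r)"
    then obtain a b c t where v: "v = geom_sum (2 powr - r) a * geom_sum (3 powr - r) b * geom_sum (5 powr - r) c * t"
      and t: "t \<in> {1..u_tail 3 r}"
      unfolding geom_products_def by auto
    let ?f = "\<lambda>t. geom_sum (2 powr - r) a * geom_sum (3 powr - r) b * geom_sum (5 powr - r) c * t"
    have "{1..<u_tail 3 r} \<subseteq> ?f -` sigma_closure r"
      using geom_products_mem_sigma_closure[OF r not_mighty] by auto
    then have "closure {1..<u_tail 3 r} \<subseteq> ?f -` sigma_closure r"
      by (intro closure_minimal continuous_closed_vimage) (auto simp: sigma_closure_def intro!: continuous_intros)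
    then show "v \<in> sigma_closure r" using t v closure_atLeastLessThan[OF u_tail_gt_1[OF r]] by auto
  qed
  then show "closure (geom_products (2 powr - r) (3 powr - r) (5 powr - r) (u_tail 3 r)) \<subseteq> sigma_closure r"
    by (intro closure_minimal) (auto simp: sigma_closure_def)
qed

section \<open>Components of the closure\<close>

lemma components_closure_card_le:
  fixes A :: "'a::topological_space set"
  assumes "A \<subseteq> \<Union>(set Ks)" "\<And>K. K \<in> set Ks \<Longrightarrow> closed K \<and> connected K \<and> K \<subseteq> closure A"
  shows "finite (components (closure A)) \<and> card (components (closure A)) \<le> length Ks"
proof -
  let ?S = "closure A"
  have cover: "?S \<subseteq> \<Union>(set Ks)" using assms by (intro closure_minimal closed_Union) auto
  let ?h = "\<lambda>K. connected_component_set ?S (SOME y. y \<in> K)"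
  have sub: "components ?S \<subseteq> ?h ` set Ks"
  proof
    fix C assume "C \<in> components ?S"
    then obtain x where x: "x \<in> ?S" "C = connected_component_set ?S x" unfolding components_def by blast
    obtain K where K: "K \<in> set Ks" "x \<in> K" using cover x(1) by blast
    have "K \<subseteq> connected_component_set ?S x"
      using assms(2)[OF K(1)] K(2) by (intro connected_component_maximal) auto
    moreover have "(SOME y. y \<in> K) \<in> K" using K(2) by (rule someI)
    ultimately have "?h K = C" using x(2) connected_component_eq by blast
    then show "C \<in> ?h ` set Ks" using K(1) by blast
  qed
  have "card (?h ` set Ks) \<le> length Ks" using card_image_le[of "set Ks" ?h] card_length[of Ks] by simp
  then show ?thesis using sub by (meson card_mono finite_imageI finite_set finite_subset order_trans)
qed

lemma Icc_subset_if_Ico_subset_closed: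
  fixes T :: "real set"
  assumes "closed T" "a < b" "{a..<b} \<subseteq> T"
  shows "{a..b} \<subseteq> T"
  using closure_minimal[OF assms(3,1)] closure_atLeastLessThan[OF assms(2)] by simp

lemma scaled_Ico_subset:
  fixes T :: "real set"
  assumes "0 < s" "\<And>t. a \<le> t \<Longrightarrow> t < b \<Longrightarrow> s * t \<in> T"
  shows "{s * a ..< s * b} \<subseteq> T"
proof
  fix v assume "v \<in> {s * a ..< s * b}"
  then have "a \<le> v / s" "v / s < b" using assms(1) by (auto simp: field_simps)
  then show "v \<in> T" using assms by (metis nonzero_mult_div_cancel_left less_irrefl times_divide_eq_right)
qed

lemma one_plus_le_inverse_one_minus:
  fixes q :: real
  assumes "q < 1"
  shows "1 + q \<le> 1 / (1 - q)"
proof -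
  have "(1 + q) * (1 - q) \<le> 1" by (simp add: algebra_simps)
  then show ?thesis using assms by (simp add: pos_le_divide_eq)
qed

lemma one_plus_mult_le_divide:
  fixes q p V :: real
  assumes "0 \<le> q" "q < 1" "0 \<le> p" "1 + p \<le> V"
  shows "(1 + q) * (1 + p) \<le> V / (1 - q)"
proof -
  have "(1 + q) * (1 + p) \<le> 1 / (1 - q) * V"
    using assms one_plus_le_inverse_one_minus[OF assms(2)] by (intro mult_mono) auto
  then show ?thesis by simp
qed

lemma mult_mem_Icc:
  fixes g t lo hi U :: real
  assumes "lo \<le> g" "g \<le> hi" "0 \<le> g" "1 \<le> t" "t \<le> U"
  shows "g * t \<in> {lo .. hi * U}"
proof -
  have "g * 1 \<le> g * t" using assms(3,4) by (intro mult_left_mono)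
  moreover have "g * t \<le> hi * U" using assms by (intro mult_mono) auto
  ultimately show ?thesis using assms(1) by simp
qed

context
  fixes x y z U :: real
  assumes ratios: "0 < z" "z \<le> y" "y \<le> x" "x < 1"
begin

lemma geom_products_mem_closure:
  "1 \<le> t \<Longrightarrow> t \<le> U \<Longrightarrow> geom_sum x a * geom_sum y b * geom_sum z c * t \<in> closure (geom_products x y z U)"
  unfolding geom_products_def by (rule closure_subset[THEN subsetD]) blast

lemma geom_sum_products_bounds:
  shows "1 \<le> geom_sum x a * geom_sum y b * geom_sum z c"
    and "geom_sum x a * geom_sum y b * geom_sum z c \<le> 1 / (1 - x) * (1 / (1 - y)) * (1 / (1 - z))"
proof -
  have ge: "1 \<le> geom_sum x a" "1 \<le> geom_sum y b" "1 \<le> geom_sum z c"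
    using ratios by (auto intro: geom_sum_ge_1)
  have le: "geom_sum x a \<le> 1 / (1 - x)" "geom_sum y b \<le> 1 / (1 - y)" "geom_sum z c \<le> 1 / (1 - z)"
    using ratios by (auto intro!: less_imp_le geom_sum_less)
  have "1 * 1 * 1 \<le> geom_sum x a * geom_sum y b * geom_sum z c" using ge by (intro mult_mono) auto
  then show "1 \<le> geom_sum x a * geom_sum y b * geom_sum z c" by simp
  show "geom_sum x a * geom_sum y b * geom_sum z c \<le> 1 / (1 - x) * (1 / (1 - y)) * (1 / (1 - z))"
    using ge le ratios by (intro mult_mono) (auto intro: order_trans[OF zero_le_one])
qed

lemma geom_products_subset_Icc: "geom_products x y z U \<subseteq> {1 .. U / (1 - z) / (1 - y) / (1 - x)}"
proof
  fix v assume "v \<in> geom_products x y z U"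
  then obtain a b c t where v: "v = geom_sum x a * geom_sum y b * geom_sum z c * t" "1 \<le> t" "t \<le> U"
    unfolding geom_products_def by blast
  have "v \<in> {1 .. 1 / (1 - x) * (1 / (1 - y)) * (1 / (1 - z)) * U}"
    unfolding v(1) using geom_sum_products_bounds[of a b c] v(2,3) by (intro mult_mem_Icc) auto
  moreover have "1 / (1 - x) * (1 / (1 - y)) * (1 / (1 - z)) * U = U / (1 - z) / (1 - y) / (1 - x)"
    by simp
  ultimately show "v \<in> {1 .. U / (1 - z) / (1 - y) / (1 - x)}" by (simp add: ac_simps)
qed

lemma closure_geom_products_eq_Icc:
  assumes "z \<le> U - 1" "y \<le> z + (U - 1)" "x \<le> y + z + (U - 1)"
  shows "closure (geom_products x y z U) = {1 .. U / (1 - z) / (1 - y) / (1 - x)}"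
proof
  let ?C = "closure (geom_products x y z U)"
  have q: "0 \<le> z" "z < 1" "0 \<le> y" "y < 1" "0 \<le> x" using ratios by auto
  have "1 < U" using assms(1) ratios by simp
  have z_bound: "U + z \<le> U / (1 - z)"
  proof -
    have "(1 + z) * (1 + (U - 1)) \<le> U / (1 - z)"
      using \<open>1 < U\<close> q by (intro one_plus_mult_le_divide) auto
    moreover have "U + z \<le> (1 + z) * U"
      using mult_left_mono[of 1 U z] q \<open>1 < U\<close> by (simp add: algebra_simps)
    ultimately show ?thesis by simp
  qed
  have z_layer: "geom_sum x a * geom_sum y b * v \<in> ?C" if "1 \<le> v" "v < U / (1 - z)" for a b v
  proof -
    have "{geom_sum z 0 * 1 ..< U / (1 - z)} \<subseteq> {v. geom_sum x a * geom_sum y b * v \<in> ?C}"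
      using assms(1) geom_products_mem_closure by (intro geom_sum_scaled_cover q) (auto simp: mult.assoc)
    then show ?thesis using that by auto
  qed
  have y_layer: "geom_sum x a * v \<in> ?C" if "1 \<le> v" "v < U / (1 - z) / (1 - y)" for a v
  proof -
    have "{geom_sum y 0 * 1 ..< U / (1 - z) / (1 - y)} \<subseteq> {v. geom_sum x a * v \<in> ?C}"
      using assms(2) z_bound z_layer by (intro geom_sum_scaled_cover q) (auto simp: mult.assoc)
    then show ?thesis using that by auto
  qed
  have yz_bound: "U + z + y \<le> U / (1 - z) / (1 - y)"
  proof -
    have "(1 + y) * (1 + (U + z - 1)) \<le> U / (1 - z) / (1 - y)"
      using z_bound q \<open>1 < U\<close> by (intro one_plus_mult_le_divide) auto
    moreover have "(1 + y) * (1 + (U + z - 1)) = U + z + y * U + y * z" by (simp add: algebra_simps)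
    moreover have "y \<le> y * U" using mult_left_mono[of 1 U y] q \<open>1 < U\<close> by simp
    moreover have "0 \<le> y * z" using q by simp
    ultimately show ?thesis by linarith
  qed
  have x_layer: "{geom_sum x 0 * 1 ..< U / (1 - z) / (1 - y) / (1 - x)} \<subseteq> ?C"
    using assms(3) yz_bound y_layer ratios by (intro geom_sum_scaled_cover q) auto
  define W where "W = U / (1 - z) / (1 - y)"
  have "1 \<le> W" using yz_bound q \<open>1 < U\<close> unfolding W_def by linarith
  then have "(1 + x) * (1 + (W - 1)) \<le> W / (1 - x)" using ratios by (intro one_plus_mult_le_divide) auto
  moreover have "1 + x \<le> (1 + x) * W" using mult_left_mono[OF \<open>1 \<le> W\<close>, of "1 + x"] q by simp
  ultimately have "1 < W / (1 - x)" using ratios by simp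
  then have "1 < U / (1 - z) / (1 - y) / (1 - x)" unfolding W_def .
  then show "{1 .. U / (1 - z) / (1 - y) / (1 - x)} \<subseteq> ?C"
    using Icc_subset_if_Ico_subset_closed x_layer by simp
  show "?C \<subseteq> {1 .. U / (1 - z) / (1 - y) / (1 - x)}"
    using geom_products_subset_Icc by (intro closure_minimal) auto
qed

lemma components_closure_geom_products_single:
  assumes "z \<le> U - 1" "y \<le> z + (U - 1)" "x \<le> y + z + (U - 1)"
  shows "finite (components (closure (geom_products x y z U)))
    \<and> card (components (closure (geom_products x y z U))) \<le> 1"
proof -
  have "finite (components (closure (geom_products x y z U)))
      \<and> card (components (closure (geom_products x y z U))) \<le> length [{1 .. U / (1 - z) / (1 - y) / (1 - x)}]"
    using geom_products_subset_Icc closure_geom_products_eq_Icc[OF assms]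
    by (intro components_closure_card_le) (auto intro: is_interval_connected)
  then show ?thesis by simp
qed

lemma x_layer_overlaps:
  assumes "x\<^sup>2 \<le> z + (U - 1)" "z \<le> x ^ 3 + (U - 1)" "y \<le> z + x\<^sup>2 + (U - 1)"
  shows "geom_sum x 2 \<le> (1 + x) * (U / (1 - z))"
    and "geom_sum x 2 * (1 + z) \<le> U / (1 - x)"
    and "(1 + x) * (1 + y) \<le> U / (1 - z) / (1 - x)"
    and "geom_sum x 2 * (1 + y) \<le> (1 + x) * (U / (1 - z) / (1 - y))"
proof -
  have q: "0 < z" "z < 1" "0 < y" "y < 1" "0 < x" "x < 1" using ratios by auto
  have key: "(1 + x + x\<^sup>2) * (1 - z) \<le> (1 + x) * U"
  proof -
    have "(1 + x) * (1 + x\<^sup>2 - z) \<le> (1 + x) * U" using assms(1) q by (intro mult_left_mono) auto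
    moreover have "0 \<le> x ^ 3" "0 \<le> x\<^sup>2 * z" using q by auto
    ultimately show ?thesis by (simp add: algebra_simps power2_eq_square power3_eq_cube)
  qed
  then show "geom_sum x 2 \<le> (1 + x) * (U / (1 - z))"
    using q by (simp add: geom_sum_2 pos_le_divide_eq)
  have "(1 + x + x\<^sup>2) * (1 + z) * (1 - x) \<le> U"
  proof -
    have "0 \<le> x ^ 3 * z" using q by simp
    then show ?thesis using assms(2) by (simp add: algebra_simps power2_eq_square power3_eq_cube)
  qed
  then show "geom_sum x 2 * (1 + z) \<le> U / (1 - x)"
    using q by (simp add: geom_sum_2 pos_le_divide_eq)
  have "(1 + x) * (1 + y) * ((1 - z) * (1 - x)) \<le> U"
  proof -
    have "0 \<le> y * z * (1 - x\<^sup>2)" "0 \<le> x\<^sup>2 * (y - z)"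
      using q ratios by (auto simp: power2_eq_square mult_le_one)
    then show ?thesis using assms(3) by (simp add: algebra_simps power2_eq_square)
  qed
  then show "(1 + x) * (1 + y) \<le> U / (1 - z) / (1 - x)"
    using q by (simp add: pos_le_divide_eq)
  have "(1 + x + x\<^sup>2) * (1 + y) * ((1 - z) * (1 - y)) \<le> (1 + x + x\<^sup>2) * (1 - z)"
  proof -
    have "(1 + x + x\<^sup>2) * (1 + y) * ((1 - z) * (1 - y)) = (1 + x + x\<^sup>2) * (1 - z) * (1 - y\<^sup>2)"
      by (simp add: algebra_simps power2_eq_square)
    also have "\<dots> \<le> (1 + x + x\<^sup>2) * (1 - z) * 1" using q by (intro mult_left_mono) auto
    finally show ?thesis by simp
  qed
  with key show "geom_sum x 2 * (1 + y) \<le> (1 + x) * (U / (1 - z) / (1 - y))"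
    using q by (simp add: geom_sum_2 pos_le_divide_eq)
qed

lemma closure_geom_products_z_layer:
  assumes "1 + z\<^sup>2 \<le> U" "1 + z \<le> v" "v < U / (1 - z)"
  shows "geom_sum x a * geom_sum y b * v \<in> closure (geom_products x y z U)"
proof -
  have "{geom_sum z 1 * 1 ..< U / (1 - z)}
      \<subseteq> {v. geom_sum x a * geom_sum y b * v \<in> closure (geom_products x y z U)}"
    using assms(1) ratios geom_products_mem_closure
    by (intro geom_sum_scaled_cover) (auto simp: mult.assoc power2_eq_square)
  then show ?thesis using assms(2,3) by auto
qed

lemma closure_geom_products_y_layer:
  assumes "1 + y\<^sup>2 \<le> U" "1 + z\<^sup>2 \<le> U" "z \<le> y\<^sup>2 + (U - 1)"
    and "1 + y \<le> v" "v < U / (1 - z) / (1 - y)"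
  shows "geom_sum x a * v \<in> closure (geom_products x y z U)"
proof -
  let ?T = "{v. geom_sum x a * v \<in> closure (geom_products x y z U)}"
  have q: "0 < z" "z < 1" "0 < y" "y < 1" using ratios by auto
  have low: "{geom_sum y 1 * 1 ..< U / (1 - y)} \<subseteq> ?T"
    using assms(1) q geom_products_mem_closure[of _ a _ 0]
    by (intro geom_sum_scaled_cover) (auto simp: power2_eq_square mult.assoc)
  have high: "{geom_sum y 1 * (1 + z) ..< U / (1 - z) / (1 - y)} \<subseteq> ?T"
  proof (rule geom_sum_scaled_cover)
    show "(1 + z) * (1 + y ^ Suc 1) \<le> U / (1 - z)"
      using assms(1) q by (intro one_plus_mult_le_divide) (auto simp: power2_eq_square)
    show "geom_sum y (c + 1) * t \<in> ?T" if "1 + z \<le> t" "t < U / (1 - z)" for c t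
      using closure_geom_products_z_layer[OF assms(2) that, of a "c + 1"] by (simp add: mult.assoc)
  qed (use q in auto)
  have "(1 + y) * (1 + z) * (1 - y) \<le> U"
  proof -
    have "0 \<le> y\<^sup>2 * z" using q by simp
    then show ?thesis using assms(3) by (simp add: algebra_simps power2_eq_square)
  qed
  then have "(1 + y) * (1 + z) \<le> U / (1 - y)" using q by (simp add: pos_le_divide_eq)
  then have "v \<in> {geom_sum y 1 * 1 ..< U / (1 - y)} \<union> {geom_sum y 1 * (1 + z) ..< U / (1 - z) / (1 - y)}"
    using assms(4,5) by auto
  then show ?thesis using low high by blast
qed

lemma closure_geom_products_x_layer:
  assumes "1 + x ^ 3 \<le> U" "1 + y\<^sup>2 \<le> U" "1 + z\<^sup>2 \<le> U"
    and "z \<le> y\<^sup>2 + (U - 1)" "x\<^sup>2 \<le> z + (U - 1)" "z \<le> x ^ 3 + (U - 1)" "y \<le> z + x\<^sup>2 + (U - 1)"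
  shows "{(1 + x) * (1 + z) ..< U / (1 - z) / (1 - y) / (1 - x)} \<subseteq> closure (geom_products x y z U)"
    (is "_ \<subseteq> ?C")
proof -
  have q: "0 < z" "z < 1" "0 < y" "y < 1" "0 < x" "x < 1" using ratios by auto
  have "0 \<le> U" using assms(3) zero_le_power2[of z] by linarith
  then have "U \<le> U / (1 - z)" using mult_left_mono[of "1 - z" 1 U] q by (simp add: le_divide_eq)
  have A: "{(1 + x) * (1 + z) ..< (1 + x) * (U / (1 - z))} \<subseteq> ?C"
    using closure_geom_products_z_layer[OF assms(3), of _ 1 0] q by (intro scaled_Ico_subset) auto
  have B: "{(1 + x) * (1 + y) ..< (1 + x) * (U / (1 - z) / (1 - y))} \<subseteq> ?C"
    using closure_geom_products_y_layer[OF assms(2-4), of _ 1] q by (intro scaled_Ico_subset) auto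
  have C: "{geom_sum x 2 * 1 ..< U / (1 - x)} \<subseteq> ?C"
    using assms(1) q geom_products_mem_closure[of _ _ 0 0]
    by (intro geom_sum_scaled_cover) (auto simp: numeral_eq_Suc)
  have D: "{geom_sum x 2 * (1 + z) ..< U / (1 - z) / (1 - x)} \<subseteq> ?C"
  proof (rule geom_sum_scaled_cover)
    show "(1 + z) * (1 + x ^ Suc 2) \<le> U / (1 - z)"
      using assms(1) q by (intro one_plus_mult_le_divide) auto
    show "geom_sum x (c + 2) * t \<in> ?C" if "1 + z \<le> t" "t < U / (1 - z)" for c t
      using closure_geom_products_z_layer[OF assms(3) that, of "c + 2" 0] by simp
  qed (use q in auto)
  have E: "{geom_sum x 2 * (1 + y) ..< U / (1 - z) / (1 - y) / (1 - x)} \<subseteq> ?C"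
  proof (rule geom_sum_scaled_cover)
    show "(1 + y) * (1 + x ^ Suc 2) \<le> U / (1 - z) / (1 - y)"
      using assms(1) q \<open>U \<le> U / (1 - z)\<close> by (intro one_plus_mult_le_divide) auto
    show "geom_sum x (c + 2) * t \<in> ?C" if "1 + y \<le> t" "t < U / (1 - z) / (1 - y)" for c t
      using closure_geom_products_y_layer[OF assms(2-4) that, of "c + 2"] .
  qed (use q in auto)
  (* As v increases it passes through the pieces A, C, D, B, E; x_layer_overlaps says that each
     of them starts before the previous one ends. *)
  note overlaps = x_layer_overlaps[OF assms(5-7)]
  show ?thesis
  proof
    fix v assume "v \<in> {(1 + x) * (1 + z) ..< U / (1 - z) / (1 - y) / (1 - x)}"
    then have v: "(1 + x) * (1 + z) \<le> v" "v < U / (1 - z) / (1 - y) / (1 - x)" by auto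
    consider "v < (1 + x) * (U / (1 - z))"
      | "(1 + x) * (U / (1 - z)) \<le> v" "v < U / (1 - x)"
      | "U / (1 - x) \<le> v" "v < U / (1 - z) / (1 - x)"
      | "U / (1 - z) / (1 - x) \<le> v" "v < (1 + x) * (U / (1 - z) / (1 - y))"
      | "(1 + x) * (U / (1 - z) / (1 - y)) \<le> v"
      by linarith
    then show "v \<in> ?C"
    proof cases
      case 1
      then show ?thesis using v by (intro subsetD[OF A]) auto
    next
      case 2
      then show ?thesis using overlaps(1) by (intro subsetD[OF C]) auto
    next
      case 3
      then show ?thesis using overlaps(2) by (intro subsetD[OF D]) auto
    next
      case 4
      then show ?thesis using overlaps(3) by (intro subsetD[OF B]) auto
    next
      case 5
      then show ?thesis using v overlaps(4) by (intro subsetD[OF E]) auto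
    qed
  qed
qed

lemma geom_sum_products_ge_1_plus:
  assumes "0 < b \<or> 0 < c"
  shows "1 + z \<le> geom_sum y b * geom_sum z c"
proof (cases "0 < b")
  case True
  then have "1 + z \<le> geom_sum y b * 1" using geom_sum_ge_1_plus[of y b] ratios by simp
  also have "\<dots> \<le> geom_sum y b * geom_sum z c"
    using ratios geom_sum_ge_1[of y b] geom_sum_ge_1[of z c] by (intro mult_left_mono) auto
  finally show ?thesis .
next
  case False
  then show ?thesis using assms geom_sum_ge_1_plus[of z c] ratios by simp
qed

lemma geom_products_subset_five_intervals:
  assumes "z * (1 + x) \<le> x\<^sup>2"
  shows "geom_products x y z U \<subseteq> {1 .. U} \<union> {1 + z .. U / (1 - z)} \<union> {1 + y .. U / (1 - z) / (1 - y)}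
    \<union> {1 + x .. (1 + x) * U} \<union> {(1 + x) * (1 + z) .. U / (1 - z) / (1 - y) / (1 - x)}"
proof
  have q: "0 < z" "z < 1" "0 < y" "y < 1" "0 < x" "x < 1" using ratios by auto
  fix v assume "v \<in> geom_products x y z U"
  then obtain a b c t where v: "v = geom_sum x a * geom_sum y b * geom_sum z c * t" "1 \<le> t" "t \<le> U"
    unfolding geom_products_def by blast
  define g where "g = geom_sum x a * geom_sum y b * geom_sum z c"
  note g_bounds = geom_sum_products_bounds[of a b c, folded g_def]
  have in_Icc: "v \<in> {lo .. hi * U}" if "lo \<le> g" "g \<le> hi" for lo hi
    unfolding v(1) g_def[symmetric] using that g_bounds(1) v(2,3) by (intro mult_mem_Icc) auto
  have in_top: "v \<in> {(1 + x) * (1 + z) .. U / (1 - z) / (1 - y) / (1 - x)}" if "(1 + x) * (1 + z) \<le> g"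
  proof -
    have "v \<in> {(1 + x) * (1 + z) .. 1 / (1 - x) * (1 / (1 - y)) * (1 / (1 - z)) * U}"
      using in_Icc that g_bounds(2) by blast
    moreover have "1 / (1 - x) * (1 / (1 - y)) * (1 / (1 - z)) * U = U / (1 - z) / (1 - y) / (1 - x)"
      by simp
    ultimately show ?thesis by (simp add: ac_simps)
  qed
  have ge: "1 \<le> geom_sum y b" "1 \<le> geom_sum z c" using q by (auto intro: geom_sum_ge_1)
  have y_le: "geom_sum y b * geom_sum z c \<le> 1 / (1 - y) * (1 / (1 - z))"
    using ge q by (intro mult_mono less_imp_le geom_sum_less) auto
  consider "a = 0" "b = 0" "c = 0" | "a = 0" "b = 0" "0 < c" | "a = 0" "0 < b"
    | "a = 1" "b = 0" "c = 0" | "a = 1" "0 < b \<or> 0 < c" | "2 \<le> a"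
    by linarith
  then show "v \<in> {1 .. U} \<union> {1 + z .. U / (1 - z)} \<union> {1 + y .. U / (1 - z) / (1 - y)}
    \<union> {1 + x .. (1 + x) * U} \<union> {(1 + x) * (1 + z) .. U / (1 - z) / (1 - y) / (1 - x)}"
  proof cases
    case 1
    then show ?thesis using in_Icc[of 1 1] by (simp add: g_def)
  next
    case 2
    then show ?thesis using in_Icc[of "1 + z" "1 / (1 - z)"] geom_sum_ge_1_plus[of z c] geom_sum_less[of z c] q
      by (simp add: g_def)
  next
    case 3
    have "1 + y \<le> geom_sum y b * 1" using geom_sum_ge_1_plus[of y b] q 3 by simp
    also have "\<dots> \<le> geom_sum y b * geom_sum z c" using ge by (intro mult_left_mono) auto
    finally show ?thesis using in_Icc[of "1 + y" "1 / (1 - y) * (1 / (1 - z))"] y_le 3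
      by (simp add: g_def ac_simps)
  next
    case 4
    then show ?thesis using in_Icc[of "1 + x" "1 + x"] by (simp add: g_def)
  next
    case 5
    then have "(1 + x) * (1 + z) \<le> g" unfolding g_def using geom_sum_products_ge_1_plus[of b c] q
      by (simp add: mult.assoc)
    then show ?thesis using in_top by blast
  next
    case 6
    have "(1 + x) * (1 + z) \<le> geom_sum x 2" using assms by (simp add: geom_sum_2 algebra_simps)
    also have "\<dots> \<le> geom_sum x a * 1 * 1" using geom_sum_mono[of x 2 a] 6 q by simp
    also have "\<dots> \<le> g" unfolding g_def using ge geom_sum_ge_1[of x a] q by (intro mult_mono) auto
    finally show ?thesis using in_top by blast
  qed
qed

lemma five_intervals_subset_closure:
  assumes "1 + x ^ 3 \<le> U" "1 + y\<^sup>2 \<le> U" "1 + z\<^sup>2 \<le> U"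
    and "z \<le> y\<^sup>2 + (U - 1)" "x\<^sup>2 \<le> z + (U - 1)" "z \<le> x ^ 3 + (U - 1)" "y \<le> z + x\<^sup>2 + (U - 1)"
  shows "{1 .. U} \<subseteq> closure (geom_products x y z U)"
    and "{1 + z .. U / (1 - z)} \<subseteq> closure (geom_products x y z U)"
    and "{1 + y .. U / (1 - z) / (1 - y)} \<subseteq> closure (geom_products x y z U)"
    and "{1 + x .. (1 + x) * U} \<subseteq> closure (geom_products x y z U)"
    and "{(1 + x) * (1 + z) .. U / (1 - z) / (1 - y) / (1 - x)} \<subseteq> closure (geom_products x y z U)"
proof -
  let ?C = "closure (geom_products x y z U)"
  have q: "0 < z" "z < 1" "0 < y" "y < 1" "0 < x" "x < 1" using ratios by auto
  have "0 < z\<^sup>2" using q by simp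
  then have "1 < U" using assms(3) by linarith
  have strict: "lo < hi * U" if "0 < lo" "lo \<le> hi" for lo hi
  proof -
    have "0 < hi" using that by linarith
    from mult_strict_left_mono[OF \<open>1 < U\<close> this] show ?thesis using that by linarith
  qed
  have inv: "1 + q \<le> 1 / (1 - q)" "1 \<le> 1 / (1 - q)" if "0 \<le> q" "q < 1" for q :: real
    using one_plus_le_inverse_one_minus[OF that(2)] that by auto
  show "{1 .. U} \<subseteq> ?C" using geom_products_mem_closure[of _ 0 0 0] by auto
  show "{1 + z .. U / (1 - z)} \<subseteq> ?C"
  proof (rule Icc_subset_if_Ico_subset_closed)
    have "1 + z < 1 / (1 - z) * U" using inv[of z] q by (intro strict) auto
    then show "1 + z < U / (1 - z)" by simp
  qed (use closure_geom_products_z_layer[OF assms(3), of _ 0 0] in auto)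
  show "{1 + y .. U / (1 - z) / (1 - y)} \<subseteq> ?C"
  proof (rule Icc_subset_if_Ico_subset_closed)
    have "1 + y \<le> 1 / (1 - y) * (1 / (1 - z))"
      using inv[of y] inv[of z] q mult_mono[of "1 + y" "1 / (1 - y)" 1 "1 / (1 - z)"] by simp
    then have "1 + y < 1 / (1 - y) * (1 / (1 - z)) * U" by (rule strict[rotated]) (use q in linarith)
    then show "1 + y < U / (1 - z) / (1 - y)" by (simp add: ac_simps)
  qed (use closure_geom_products_y_layer[OF assms(2-4), of _ 0] in auto)
  show "{1 + x .. (1 + x) * U} \<subseteq> ?C"
  proof
    fix v assume "v \<in> {1 + x .. (1 + x) * U}"
    then have "1 \<le> v / (1 + x)" "v / (1 + x) \<le> U" using q by (auto simp: field_simps)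
    then have "geom_sum x 1 * geom_sum y 0 * geom_sum z 0 * (v / (1 + x)) \<in> ?C"
      by (rule geom_products_mem_closure)
    then show "v \<in> ?C" using q by simp
  qed
  show "{(1 + x) * (1 + z) .. U / (1 - z) / (1 - y) / (1 - x)} \<subseteq> ?C"
  proof (rule Icc_subset_if_Ico_subset_closed)
    have "(1 + x) * (1 + z) \<le> 1 / (1 - x) * (1 / (1 - z))" using inv[of x] inv[of z] q by (intro mult_mono) auto
    also have "\<dots> = 1 / (1 - x) * 1 * (1 / (1 - z))" by simp
    also have "\<dots> \<le> 1 / (1 - x) * (1 / (1 - y)) * (1 / (1 - z))"
      using inv(2)[of y] q by (intro mult_right_mono mult_left_mono) auto
    finally have "(1 + x) * (1 + z) < 1 / (1 - x) * (1 / (1 - y)) * (1 / (1 - z)) * U"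
      by (rule strict[rotated]) (use q in simp)
    then show "(1 + x) * (1 + z) < U / (1 - z) / (1 - y) / (1 - x)" by (simp add: ac_simps)
  qed (use closure_geom_products_x_layer[OF assms(1-7)] in auto)
qed

lemma components_closure_geom_products_five:
  assumes "1 + x ^ 3 \<le> U" "1 + y\<^sup>2 \<le> U" "1 + z\<^sup>2 \<le> U"
    and "z \<le> y\<^sup>2 + (U - 1)" "x\<^sup>2 \<le> z + (U - 1)" "z \<le> x ^ 3 + (U - 1)" "y \<le> z + x\<^sup>2 + (U - 1)"
    and "z * (1 + x) \<le> x\<^sup>2"
  shows "finite (components (closure (geom_products x y z U)))
    \<and> card (components (closure (geom_products x y z U))) \<le> 5"
proof -
  let ?Ks = "[{1 .. U}, {1 + z .. U / (1 - z)}, {1 + y .. U / (1 - z) / (1 - y)}, {1 + x .. (1 + x) * U},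
    {(1 + x) * (1 + z) .. U / (1 - z) / (1 - y) / (1 - x)}]"
  have "\<forall>K \<in> set ?Ks. K \<subseteq> closure (geom_products x y z U)"
    using five_intervals_subset_closure[OF assms(1-7)] by simp
  moreover have "geom_products x y z U \<subseteq> \<Union>(set ?Ks)"
    using geom_products_subset_five_intervals[OF assms(8)] by (simp add: Un_assoc)
  ultimately have "finite (components (closure (geom_products x y z U)))
      \<and> card (components (closure (geom_products x y z U))) \<le> length ?Ks"
    by (intro components_closure_card_le) (auto intro: is_interval_connected)
  then show ?thesis by simp
qed

end

section \<open>Estimates for powers of small primes\<close>

lemma powr_half_nat: "0 < q \<Longrightarrow> q powr (real n / 2) = sqrt (q ^ n)"
  by (simp add: powr_half_sqrt_powr powr_realpow)

lemma le_powr_if_sq_le_power: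
  fixes q c r :: real
  assumes "0 < q" "q \<le> 1" "r \<le> real n / 2" "0 \<le> c" "c\<^sup>2 \<le> q ^ n"
  shows "c \<le> q powr r"
proof -
  have "c \<le> sqrt (q ^ n)" using assms(4,5) by (simp add: real_le_rsqrt)
  also have "\<dots> = q powr (real n / 2)" using powr_half_nat[OF assms(1)] by simp
  also have "\<dots> \<le> q powr r" using assms(1-3) by (intro powr_mono') auto
  finally show ?thesis .
qed

lemma powr_le_if_power_le_sq:
  fixes q c r :: real
  assumes "0 < q" "q \<le> 1" "real n / 2 \<le> r" "0 \<le> c" "q ^ n \<le> c\<^sup>2"
  shows "q powr r \<le> c"
proof -
  have "q powr r \<le> q powr (real n / 2)" using assms(1-3) by (intro powr_mono') auto
  also have "\<dots> = sqrt (q ^ n)" using powr_half_nat[OF assms(1)] by simp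
  also have "\<dots> \<le> c" using real_sqrt_le_mono[OF assms(5)] assms(4) by simp
  finally show ?thesis .
qed

lemma powr_neg_mult_ratio_powr:
  fixes a b r :: real
  assumes "0 < a" "0 < b"
  shows "a powr - r * (a / b) powr r = b powr - r"
  using assms by (simp add: powr_divide powr_minus field_simps)

lemma powr_neg_power:
  fixes a r :: real
  assumes "0 < a"
  shows "(a powr - r) ^ n = (a ^ n) powr - r"
  using assms by (simp add: powr_realpow[symmetric] powr_powr powr_power mult.commute)

(* Dividing by a suitable power turns each of the following inequalities into a bound for a
   combination of powers (a / b) powr r with a < b.  These decrease in r, so it suffices to check
   the bound at the end of the range of r, where le_powr_if_sq_le_power and powr_le_if_power_le_sq
   reduce it to rational arithmetic. *)
lemma powr_inequalities_below_five_halves: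
  fixes r :: real
  assumes "r \<le> 5 / 2"
  shows "5 powr - r \<le> (3 powr - r)\<^sup>2 + 2 * 7 powr - r"
    and "(2 powr - r)\<^sup>2 \<le> 5 powr - r + 2 * 7 powr - r"
    and "5 powr - r \<le> (2 powr - r) ^ 3 + 2 * 7 powr - r"
    and "3 powr - r \<le> 5 powr - r + (2 powr - r)\<^sup>2 + 2 * 7 powr - r"
proof -
  have lb: "c \<le> (a / b) powr r" if "0 < a" "a \<le> b" "0 \<le> c" "c\<^sup>2 \<le> (a / b) ^ 5" for a b c :: real
    using that assms by (intro le_powr_if_sq_le_power[where n = 5]) auto
  have scale: "a powr - r \<le> a powr - r * s" if "1 \<le> s" for a s :: real
    using that mult_left_mono[of 1 s "a powr - r"] by simp
  note ratio = powr_neg_mult_ratio_powr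
  have b1: "21 / 100 \<le> (5 / 9) powr r" by (rule lb) (simp_all add: power_divide)
  have b2: "2 / 5 \<le> (5 / 7) powr r" by (rule lb) (simp_all add: power_divide)
  have "1 \<le> (5 / 9) powr r + 2 * (5 / 7) powr r"
    using b1 b2 by linarith
  from scale[OF this, of 5] show "5 powr - r \<le> (3 powr - r)\<^sup>2 + 2 * 7 powr - r"
    by (simp add: distrib_left mult.left_commute[of "5 powr - r"] ratio powr_neg_power)
  have b1: "11 / 20 \<le> (4 / 5) powr r" by (rule lb) (simp_all add: power_divide)
  have b2: "23 / 100 \<le> (4 / 7) powr r" by (rule lb) (simp_all add: power_divide)
  have "1 \<le> (4 / 5) powr r + 2 * (4 / 7) powr r"
    using b1 b2 by linarith
  from scale[OF this, of 4] show "(2 powr - r)\<^sup>2 \<le> 5 powr - r + 2 * 7 powr - r"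
    by (simp add: distrib_left mult.left_commute[of "4 powr - r"] ratio powr_neg_power)
  have b1: "3 / 10 \<le> (5 / 8) powr r" by (rule lb) (simp_all add: power_divide)
  have b2: "2 / 5 \<le> (5 / 7) powr r" by (rule lb) (simp_all add: power_divide)
  have "1 \<le> (5 / 8) powr r + 2 * (5 / 7) powr r"
    using b1 b2 by linarith
  from scale[OF this, of 5] show "5 powr - r \<le> (2 powr - r) ^ 3 + 2 * 7 powr - r"
    by (simp add: distrib_left mult.left_commute[of "5 powr - r"] ratio powr_neg_power)
  have b1: "278 / 1000 \<le> (3 / 5) powr r" by (rule lb) (simp_all add: power_divide)
  have b2: "487 / 1000 \<le> (3 / 4) powr r" by (rule lb) (simp_all add: power_divide)
  have b3: "12 / 100 \<le> (3 / 7) powr r" by (rule lb) (simp_all add: power_divide)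
  have "1 \<le> (3 / 5) powr r + (3 / 4) powr r + 2 * (3 / 7) powr r"
    using b1 b2 b3 by linarith
  from scale[OF this, of 3] show "3 powr - r \<le> 5 powr - r + (2 powr - r)\<^sup>2 + 2 * 7 powr - r"
    by (simp add: distrib_left mult.left_commute[of "3 powr - r"] ratio powr_neg_power)
qed

lemma powr_inequality_above_three_halves:
  fixes r :: real
  assumes "3 / 2 \<le> r"
  shows "5 powr - r * (1 + 2 powr - r) \<le> (2 powr - r)\<^sup>2"
proof -
  have ub: "(a / b) powr r \<le> c" if "0 < a" "a \<le> b" "0 \<le> c" "(a / b) ^ 3 \<le> c\<^sup>2" for a b c :: real
    using that assms by (intro powr_le_if_power_le_sq[where n = 3]) auto
  have b1: "(4 / 5) powr r \<le> 72 / 100" by (rule ub) (simp_all add: power_divide)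
  have b2: "(2 / 5) powr r \<le> 26 / 100" by (rule ub) (simp_all add: power_divide)
  have "4 powr - r * ((4 / 5) powr r + (2 / 5) powr r) \<le> 4 powr - r * 1"
    using b1 b2 by (intro mult_left_mono) auto
  moreover have "4 powr - r * (2 / 5) powr r = 2 powr - r * 5 powr - r"
    using powr_neg_mult_ratio_powr[of 2 5 r] powr_mult[of 2 2 "- r"] by (simp add: mult.assoc)
  ultimately show ?thesis
    by (simp add: distrib_left powr_neg_mult_ratio_powr powr_neg_power algebra_simps)
qed

lemma powr_inequalities_below_three_halves:
  fixes r :: real
  assumes "r \<le> 3 / 2"
  shows "5 powr - r \<le> 2 * 7 powr - r"
    and "3 powr - r \<le> 5 powr - r + 2 * 7 powr - r"
    and "2 powr - r \<le> 3 powr - r + 5 powr - r + 2 * 7 powr - r"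
proof -
  have lb: "c \<le> (a / b) powr r" if "0 < a" "a \<le> b" "0 \<le> c" "c\<^sup>2 \<le> (a / b) ^ 3" for a b c :: real
    using that assms by (intro le_powr_if_sq_le_power[where n = 3]) auto
  have scale: "a powr - r \<le> a powr - r * s" if "1 \<le> s" for a s :: real
    using that mult_left_mono[of 1 s "a powr - r"] by simp
  note ratio = powr_neg_mult_ratio_powr
  have "1 / 2 \<le> (5 / 7) powr r" by (rule lb) (simp_all add: power_divide)
  then have "1 \<le> 2 * (5 / 7) powr r" by linarith
  from scale[OF this, of 5] show "5 powr - r \<le> 2 * 7 powr - r"
    by (simp add: mult.left_commute[of "5 powr - r"] ratio)
  have b1: "46 / 100 \<le> (3 / 5) powr r" by (rule lb) (simp_all add: power_divide)
  have b2: "27 / 100 \<le> (3 / 7) powr r" by (rule lb) (simp_all add: power_divide)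
  have "1 \<le> (3 / 5) powr r + 2 * (3 / 7) powr r" using b1 b2 by linarith
  from scale[OF this, of 3] show "3 powr - r \<le> 5 powr - r + 2 * 7 powr - r"
    by (simp add: distrib_left mult.left_commute[of "3 powr - r"] ratio)
  have b1: "1 / 2 \<le> (2 / 3) powr r" by (rule lb) (simp_all add: power_divide)
  have b2: "1 / 4 \<le> (2 / 5) powr r" by (rule lb) (simp_all add: power_divide)
  have b3: "15 / 100 \<le> (2 / 7) powr r" by (rule lb) (simp_all add: power_divide)
  have "1 \<le> (2 / 3) powr r + (2 / 5) powr r + 2 * (2 / 7) powr r" using b1 b2 b3 by linarith
  from scale[OF this, of 2] show "2 powr - r \<le> 3 powr - r + 5 powr - r + 2 * 7 powr - r"
    by (simp add: distrib_left mult.left_commute[of "2 powr - r"] ratio)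
qed

lemma small_powers_le_seven:
  fixes r :: real
  assumes "0 \<le> r"
  shows "(2 powr - r) ^ 3 \<le> 7 powr - r" "(3 powr - r)\<^sup>2 \<le> 7 powr - r" "(5 powr - r)\<^sup>2 \<le> 7 powr - r"
  using assms by (simp_all add: powr_neg_power powr_mono2')

section \<open>Mightiness of 7 for large r\<close>

lemma sum_inverse_odd_squares_le:
  assumes "finite F" "\<And>n. n \<in> F \<Longrightarrow> odd n \<and> 2 * m < n" "0 < m"
  shows "(\<Sum>n\<in>F. 1 / (real n)\<^sup>2) \<le> 1 / (4 * real m)"
proof -
  define f where "f j = 1 / (4 * real j)" for j
  obtain M where M: "F \<subseteq> {..<M}" using finite_nat_bounded[OF assms(1)] by blast
  have F: "F \<subseteq> (\<lambda>j. 2 * j + 1) ` {m..<M}"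
  proof
    fix n assume "n \<in> F"
    then have "odd n" "2 * m < n" "n < M" using assms(2) M by auto
    then obtain j where "n = 2 * j + 1" "m \<le> j" "j < M" by (auto elim!: oddE)
    then show "n \<in> (\<lambda>j. 2 * j + 1) ` {m..<M}" by auto
  qed
  have step: "1 / (real (2 * j + 1))\<^sup>2 \<le> f j - f (Suc j)" if "1 \<le> j" for j
  proof -
    have "f j - f (Suc j) = 1 / (4 * real j * (real j + 1))"
      using that by (simp add: f_def field_simps)
    moreover have "4 * real j * (real j + 1) \<le> (real (2 * j + 1))\<^sup>2"
      by (simp add: power2_eq_square algebra_simps)
    moreover have "0 < 4 * real j * (real j + 1)" using that by simp
    ultimately show ?thesis by (simp add: frac_le)
  qed
  have "(\<Sum>n\<in>F. 1 / (real n)\<^sup>2) \<le> (\<Sum>n \<in> (\<lambda>j. 2 * j + 1) ` {m..<M}. 1 / (real n)\<^sup>2)"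
    using F by (intro sum_mono2) auto
  also have "\<dots> = (\<Sum>j = m..<M. 1 / (real (2 * j + 1))\<^sup>2)"
    by (subst sum.reindex) (auto simp: inj_on_def)
  also have "\<dots> \<le> (\<Sum>j = m..<M. f j - f (Suc j))"
    using assms(3) by (intro sum_mono step) auto
  also have "\<dots> \<le> f m"
  proof (cases "m \<le> M")
    case True
    have "(\<Sum>j = m..<M. f j - f (Suc j)) = f m - f M"
      using sum_Suc_diff'[OF True, of "\<lambda>j. - f j"] by (simp add: algebra_simps)
    moreover have "0 \<le> f M" by (simp add: f_def)
    ultimately show ?thesis by simp
  qed (simp add: f_def)
  finally show ?thesis unfolding f_def .
qed

(* The second entry is 10^5 * (7 / n) powr (5/2) rounded up.  The table lists all n in [11, 150]
   coprime to 30 rather than only the primes, so that its completeness can be checked by evaluation. *)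
definition five_halves_table :: "(nat \<times> nat) list" where
  "five_halves_table = [(11, 32305), (13, 21276), (17, 10880), (19, 8239), (23, 5111), (29, 2863),
    (31, 2423), (37, 1557), (41, 1205), (43, 1070), (47, 857), (49, 772), (53, 634), (59, 485),
    (61, 447), (67, 353), (71, 306), (73, 285), (77, 250), (79, 234), (83, 207), (89, 174),
    (91, 165), (97, 140), (101, 127), (103, 121), (107, 110), (109, 105), (113, 96), (119, 84),
    (121, 81), (127, 72), (131, 67), (133, 64), (137, 60), (139, 57), (143, 54), (149, 48)]"

lemma five_halves_table_fst:
  "map fst five_halves_table = filter (\<lambda>n. \<not> 2 dvd n \<and> \<not> 3 dvd n \<and> \<not> 5 dvd n) [11..<151]"
  by (simp add: five_halves_table_def upt_rec)

lemma five_halves_table_bound: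
  assumes "(n, k) \<in> set five_halves_table"
  shows "(7 / real n) powr (5 / 2) \<le> real k / 10 ^ 5"
proof -
  have nk: "7 ^ 5 * 10 ^ 10 \<le> k\<^sup>2 * n ^ 5" "11 \<le> n"
    using assms unfolding five_halves_table_def by auto
  then have "real (7 ^ 5 * 10 ^ 10) \<le> real (k\<^sup>2 * n ^ 5)" by (simp only: of_nat_le_iff)
  then have "(7 / real n) ^ 5 \<le> (real k / 10 ^ 5)\<^sup>2" using nk(2) by (simp add: power_divide field_simps)
  then show ?thesis using nk(2) by (intro powr_le_if_power_le_sq[where n = 5]) auto
qed

lemma five_halves_table_sum: "(\<Sum>(n, k) \<leftarrow> five_halves_table. real k / 10 ^ 5) \<le> 93384 / 10 ^ 5"
  by (simp add: five_halves_table_def)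

lemma sum_five_halves_le_table:
  assumes "F \<subseteq> {..150}" "\<And>p. p \<in> F \<Longrightarrow> prime p \<and> 11 \<le> p"
  shows "(\<Sum>p\<in>F. (7 / real p) powr (5 / 2)) \<le> 93384 / 10 ^ 5"
proof -
  define g where "g p = (7 / real p) powr (5 / 2)" for p :: nat
  have "sum g F \<le> sum g (set (map fst five_halves_table))"
  proof (rule sum_mono2)
    show "F \<subseteq> set (map fst five_halves_table)"
    proof
      fix p assume "p \<in> F"
      then have "prime p" "11 \<le> p" "p \<le> 150" using assms by auto
      then have "\<not> 2 dvd p \<and> \<not> 3 dvd p \<and> \<not> 5 dvd p"
        using primes_dvd_imp_eq[of 2 p] primes_dvd_imp_eq[of 3 p] primes_dvd_imp_eq[of 5 p] by auto
      then show "p \<in> set (map fst five_halves_table)"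
        unfolding five_halves_table_fst set_filter set_upt using \<open>11 \<le> p\<close> \<open>p \<le> 150\<close> by auto
    qed
  qed (auto simp: g_def)
  also have "\<dots> = (\<Sum>n \<leftarrow> map fst five_halves_table. g n)"
    by (rule sum_list_distinct_conv_sum_set[symmetric])
      (simp only: five_halves_table_fst distinct_filter distinct_upt)
  also have "\<dots> = (\<Sum>(n, k) \<leftarrow> five_halves_table. g n)"
    by (simp only: map_map comp_def case_prod_unfold)
  also have "\<dots> \<le> (\<Sum>(n, k) \<leftarrow> five_halves_table. real k / 10 ^ 5)"
  proof (rule sum_list_mono)
    fix p assume p: "p \<in> set five_halves_table"
    obtain n k where "p = (n, k)" by fastforce
    with p five_halves_table_bound[of n k]
    show "(case p of (n, k) \<Rightarrow> g n) \<le> (case p of (n, k) \<Rightarrow> real k / 10 ^ 5)" by (simp add: g_def)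
  qed
  also have "\<dots> \<le> 93384 / 10 ^ 5" by (rule five_halves_table_sum)
  finally show ?thesis unfolding g_def .
qed

lemma five_halves_le_inverse_square:
  assumes "150 < p"
  shows "(7 / real p) powr (5 / 2) \<le> 49 * (2161 / 10000) * (1 / (real p)\<^sup>2)"
proof -
  define q where "q = 7 / real p"
  have "q \<le> 7 / 150" unfolding q_def using assms by (intro divide_left_mono) auto
  also have "\<dots> \<le> (2161 / 10000)\<^sup>2" by (simp add: power_divide)
  finally have "q ^ 4 * q \<le> q ^ 4 * (2161 / 10000)\<^sup>2" unfolding q_def by (intro mult_left_mono) auto
  moreover have "q ^ 5 = q ^ 4 * q" "(q\<^sup>2 * (2161 / 10000))\<^sup>2 = q ^ 4 * (2161 / 10000)\<^sup>2" by algebra+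
  ultimately have "q powr (5 / 2) \<le> q\<^sup>2 * (2161 / 10000)"
    using assms unfolding q_def by (intro powr_le_if_power_le_sq[where n = 5]) auto
  then show ?thesis unfolding q_def by (simp add: power_divide)
qed

lemma sum_primes_five_halves_le:
  assumes "finite F" "\<And>p. p \<in> F \<Longrightarrow> prime p \<and> 11 \<le> p"
  shows "(\<Sum>p\<in>F. (7 / real p) powr (5 / 2)) \<le> 97 / 100"
proof -
  have head: "(\<Sum>p \<in> F \<inter> {..150}. (7 / real p) powr (5 / 2)) \<le> 93384 / 10 ^ 5"
    using assms(2) by (intro sum_five_halves_le_table) auto
  have "(\<Sum>p \<in> F \<inter> {150<..}. (7 / real p) powr (5 / 2))
      \<le> (\<Sum>p \<in> F \<inter> {150<..}. 49 * (2161 / 10000) * (1 / (real p)\<^sup>2))"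
    by (intro sum_mono five_halves_le_inverse_square) auto
  also have "\<dots> = 49 * (2161 / 10000) * (\<Sum>p \<in> F \<inter> {150<..}. 1 / (real p)\<^sup>2)"
    by (simp add: sum_distrib_left)
  also have "\<dots> \<le> 49 * (2161 / 10000) * (1 / (4 * real (75::nat)))"
  proof (intro mult_left_mono sum_inverse_odd_squares_le)
    fix n assume "n \<in> F \<inter> {150<..}"
    then have "prime n" "150 < n" using assms(2) by auto
    then show "odd n \<and> 2 * 75 < n" using primes_dvd_imp_eq[of 2 n] by auto
  qed (use assms(1) in auto)
  finally have tail: "(\<Sum>p \<in> F \<inter> {150<..}. (7 / real p) powr (5 / 2)) \<le> 49 * (2161 / 10000) / 300"
    by simp
  have "(\<Sum>p\<in>F. (7 / real p) powr (5 / 2)) = (\<Sum>p \<in> F \<inter> {..150} \<union> F \<inter> {150<..}. (7 / real p) powr (5 / 2))"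
    by (rule sum.cong) auto
  also have "\<dots> = (\<Sum>p \<in> F \<inter> {..150}. (7 / real p) powr (5 / 2)) + (\<Sum>p \<in> F \<inter> {150<..}. (7 / real p) powr (5 / 2))"
    using assms(1) by (intro sum.union_disjoint) auto
  finally show ?thesis using head tail by simp
qed

lemma inverse_one_minus_le_linear:
  fixes a :: real
  assumes "0 \<le> a" "a \<le> 1 / 100"
  shows "1 / (1 - a) \<le> 1 + 100 / 99 * a"
proof -
  have "(1 + 100 / 99 * a) * (1 - a) = 1 + a * (1 - 100 * a) / 99" by (simp add: field_simps)
  moreover have "0 \<le> a * (1 - 100 * a)" using assms by simp
  ultimately have "1 \<le> (1 + 100 / 99 * a) * (1 - a)" by simp
  then show ?thesis using assms by (simp add: pos_divide_le_eq)
qed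

lemma seven_powr_le_hundredth:
  fixes r :: real
  assumes "5 / 2 \<le> r"
  shows "7 powr - r \<le> 1 / 100"
proof -
  have "(1 / 7) powr r \<le> 1 / 100"
    using assms by (intro powr_le_if_power_le_sq[where n = 5]) (auto simp: power_divide)
  then show ?thesis by (simp add: powr_minus_divide powr_divide)
qed

lemma nth_prime1_powr_le_five_halves:
  assumes "5 / 2 \<le> r" "5 \<le> k"
  shows "real (nth_prime1 k) powr - r \<le> 7 powr - r * (7 / real (nth_prime1 k)) powr (5 / 2)"
proof -
  have p: "7 \<le> real (nth_prime1 k)" using nth_prime1_ge_11[OF assms(2)] by simp
  then have "real (nth_prime1 k) powr - r = 7 powr - r * (7 / real (nth_prime1 k)) powr r"
    using powr_neg_mult_ratio_powr[of 7 "real (nth_prime1 k)" r] by simp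
  also have "\<dots> \<le> 7 powr - r * (7 / real (nth_prime1 k)) powr (5 / 2)"
    using p assms(1) by (intro mult_left_mono powr_mono') auto
  finally show ?thesis .
qed

lemma sum_nth_prime1_powr_le:
  assumes "5 / 2 \<le> r"
  shows "(\<Sum>k<n. real (nth_prime1 (5 + k)) powr - r) \<le> 7 powr - r * (97 / 100)"
proof -
  have inj: "inj_on (\<lambda>k. nth_prime1 (5 + k)) {..<n}"
    by (rule inj_onI) (simp add: nth_prime1_inject)
  have "(\<Sum>k<n. real (nth_prime1 (5 + k)) powr - r)
      \<le> (\<Sum>k<n. 7 powr - r * (7 / real (nth_prime1 (5 + k))) powr (5 / 2))"
    using assms by (intro sum_mono nth_prime1_powr_le_five_halves) auto
  also have "\<dots> = 7 powr - r * (\<Sum>p \<in> (\<lambda>k. nth_prime1 (5 + k)) ` {..<n}. (7 / real p) powr (5 / 2))"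
    by (simp add: sum_distrib_left sum.reindex[OF inj])
  also have "\<dots> \<le> 7 powr - r * (97 / 100)"
    using nth_prime1_prime nth_prime1_ge_11 by (intro mult_left_mono sum_primes_five_halves_le) auto
  finally show ?thesis .
qed

lemma u_tail_4_le_exp:
  assumes "5 / 2 \<le> r"
  shows "u_tail 4 r \<le> exp (98 / 100 * 7 powr - r)"
proof -
  have r: "1 < r" using assms by simp
  define a where "a k = real (nth_prime1 (5 + k)) powr - r" for k
  have a: "0 \<le> a k" "a k \<le> 1 / 100" for k
  proof -
    have "(7 / real (nth_prime1 (5 + k))) powr (5 / 2) \<le> 1"
      using nth_prime1_ge_11[of "5 + k"] by (intro powr_le1) auto
    then have "7 powr - r * (7 / real (nth_prime1 (5 + k))) powr (5 / 2) \<le> 7 powr - r * 1"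
      by (intro mult_left_mono) auto
    then show "a k \<le> 1 / 100"
      using nth_prime1_powr_le_five_halves[OF assms, of "5 + k"] seven_powr_le_hundredth[OF assms]
      unfolding a_def by linarith
  qed (simp add: a_def)
  have "(\<Prod>k<n. euler_factor r (4 + 1 + k)) \<le> exp (98 / 100 * 7 powr - r)" for n
  proof -
    have "(\<Prod>k<n. euler_factor r (4 + 1 + k)) \<le> (\<Prod>k<n. 1 + 100 / 99 * a k)"
    proof (rule prod_mono)
      fix k assume "k \<in> {..<n}"
      have "euler_factor r (4 + 1 + k) = 1 / (1 - a k)" unfolding euler_factor_def a_def by simp
      also have "\<dots> \<le> 1 + 100 / 99 * a k" using a[of k] by (intro inverse_one_minus_le_linear)
      finally show "0 \<le> euler_factor r (4 + 1 + k) \<and> euler_factor r (4 + 1 + k) \<le> 1 + 100 / 99 * a k"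
        using euler_factor_gt_1[OF r, of "4 + 1 + k"] by simp
    qed
    also have "\<dots> \<le> exp (\<Sum>k<n. 100 / 99 * a k)"
      using a(1) by (intro prod_le_exp_sum) auto
    also have "\<dots> \<le> exp (98 / 100 * 7 powr - r)"
    proof -
      have "(\<Sum>k<n. 100 / 99 * a k) = 100 / 99 * (\<Sum>k<n. a k)" by (simp only: sum_distrib_left)
      also have "\<dots> \<le> 100 / 99 * (7 powr - r * (97 / 100))"
        using sum_nth_prime1_powr_le[OF assms, of n] unfolding a_def by (intro mult_left_mono) auto
      also have "\<dots> \<le> 98 / 100 * 7 powr - r" by simp
      finally show ?thesis by simp
    qed
    finally show ?thesis .
  qed
  then show ?thesis
    unfolding u_tail_eq_prodinf by (intro prodinf_le_const convergent_prod_euler_factor_tail r)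
qed

theorem mighty_4_if_ge_five_halves:
  assumes "5 / 2 \<le> r"
  shows "mighty r 4"
proof -
  define w where "w = 7 powr - r"
  have w: "0 < w" "w \<le> 1 / 100" using seven_powr_le_hundredth[OF assms] unfolding w_def by auto
  have "exp (98 / 100 * w) \<le> 1 + 98 / 100 * w + (98 / 100 * w)\<^sup>2" using w by (intro exp_bound) auto
  also have "(98 / 100 * w)\<^sup>2 \<le> w * w" using w by (simp add: power2_eq_square mult_mono)
  also have "w * w \<le> w * (1 / 100)" using w by (intro mult_left_mono) auto
  finally have "exp (98 / 100 * w) < 1 + w" using w by simp
  then show ?thesis
    using u_tail_4_le_exp[OF assms] unfolding mighty_def w_def by (simp add: nth_prime1_4)
qed

lemma u_tail_3_ge_if_not_mighty_4:
  assumes "1 < r" "\<not> mighty r 4"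
  shows "1 + 2 * 7 powr - r \<le> u_tail 3 r"
proof -
  define w where "w = 7 powr - r"
  have w: "0 < w" "w < 1" using nth_prime1_powr_less_half[OF assms(1), of 4] unfolding w_def nth_prime1_4 by auto
  have "1 + w \<le> u_tail 4 r" using assms(2) unfolding mighty_def w_def by (simp add: nth_prime1_4)
  then have "(1 + w) / (1 - w) \<le> u_tail 3 r"
    using u_tail_Suc[OF assms(1), of 3] w unfolding euler_factor_def w_def
    by (simp add: nth_prime1_4 divide_right_mono)
  moreover have "1 + 2 * w \<le> (1 + w) / (1 - w)"
    using w by (simp add: pos_le_divide_eq algebra_simps)
  ultimately show ?thesis unfolding w_def by linarith
qed

lemma powr_neg_2_3_5:
  fixes r :: real
  assumes "0 < r"
  shows "0 < 5 powr - r" "5 powr - r \<le> 3 powr - r" "3 powr - r \<le> 2 powr - r" "2 powr - r < 1"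
proof -
  have "2 powr - r < 2 powr 0" using assms by (intro powr_less_mono) auto
  then show "2 powr - r < 1" by simp
qed (use assms in \<open>auto intro: powr_mono2'\<close>)

theorem mainTheorem10:
  fixes r :: real
  assumes "r > 1"
    and "\<forall>m > 3. \<not> mighty r m"
  shows "finite (components (sigma_closure r)) \<and> card (components (sigma_closure r)) \<le> 5"
proof -
  define x y z w U where "x = 2 powr - r" and "y = 3 powr - r" and "z = 5 powr - r"
    and "w = 7 powr - r" and "U = u_tail 3 r"
  have not_mighty: "\<And>k. 3 < k \<Longrightarrow> \<not> mighty r k" using assms(2) by blast
  have ratios: "0 < z" "z \<le> y" "y \<le> x" "x < 1"
    unfolding x_def y_def z_def using powr_neg_2_3_5 assms(1) by simp_all
  have U: "1 + 2 * w \<le> U" "0 < w"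
    unfolding w_def U_def using u_tail_3_ge_if_not_mighty_4[OF assms(1) not_mighty] by simp_all
  have "r < 5 / 2" using mighty_4_if_ge_five_halves not_mighty[of 4] by force
  have "sigma_closure r = closure (geom_products x y z U)"
    unfolding x_def y_def z_def U_def by (rule sigma_closure_eq_closure_geom_products[OF assms(1) not_mighty])
  moreover have "finite (components (closure (geom_products x y z U)))
      \<and> card (components (closure (geom_products x y z U))) \<le> 5"
  proof (cases "r \<le> 3 / 2")
    case True
    have "finite (components (closure (geom_products x y z U)))
        \<and> card (components (closure (geom_products x y z U))) \<le> 1"
      using powr_inequalities_below_three_halves[OF True, folded x_def y_def z_def w_def] U
      by (intro components_closure_geom_products_single[OF ratios]) auto
    then show ?thesis by simp
  next
    case False
    have r: "r \<le> 5 / 2" "0 \<le> r" "3 / 2 \<le> r" using False assms(1) \<open>r < 5 / 2\<close> by simp_all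
    show ?thesis
      using powr_inequalities_below_five_halves[OF r(1), folded x_def y_def z_def w_def]
        small_powers_le_seven[OF r(2), folded x_def y_def z_def w_def]
        powr_inequality_above_three_halves[OF r(3), folded x_def z_def] U
      by (intro components_closure_geom_products_five[OF ratios]) auto
  qed
  ultimately show ?thesis by simp
qed

end
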